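(* Let $d\ge 1$, $n\ge 1$ and $r_1,\dots,r_n\ge 0$ be integers with $3d-1=n+\sum_{k=1}^n r_k$. Let $C'=(\Gamma,x_1,\dots,x_n,h)\in\mathcal M^{\mathrm{lab}}_{0,n}(\mathbb R^2,d)$ be a curve lying in the relative interior of a maximal cell of the cycle $\prod_{k=1}^n\psi_k^{r_k}\cdot\mathcal M^{\mathrm{lab}}_{0,n}(\mathbb R^2,d)$, such that each vertex of $\Gamma$ is adjacent to at most one marked end, the vertex adjacent to $x_k$ has valence $r_k+3$, and every vertex not adjacent to a marked end is $3$-valent. Assume $\Gamma$ has no string. Then $\Gamma$ has exactly $2n-2$ bounded edges, and $$|\det{}_{C'}(\mathrm{ev})| \;=\;\prod_{V}\mathrm{mult}(V),$$ the product taken over all ($3$-valent) vertices $V$ of $\Gamma$ not adjacent to any marked end. Equivalently, if $C$ denotes the curve obtained from $C'$ by forgetting the labels of the non-contracted ends, then $\nu_C\,|\det_{C'}(\mathrm{ev})|=\mathrm{mult}(C)$.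
   Context: Tropical setting. A labelled parametrized rational tropical curve of degree $d$ in $\mathbb R^2$ with $n$ marked ends is a tuple $(\Gamma,x_1,\dots,x_n,h)$ where $\Gamma$ is a metric tree (bounded edges have positive real lengths, unbounded edges are called ends, no vertices of valence $\le 2$), $x_1,\dots,x_n$ are distinct ends (the marked ends), and $h:\Gamma\to\mathbb R^2$ is continuous and affine on each edge: on an edge $e$ parametrized by arc length from an adjacent vertex $V$, $h$ moves with velocity an integer vector $v(e,V)\in\mathbb Z^2$ (the direction vector; its lattice length is the weight of $e$). The marked ends are contracted ($v=0$); the remaining $3d$ ends are labelled and have direction vectors $(-1,0)$, $(0,-1)$, $(1,1)$, exactly $d$ of each; at every vertex $V$ the balancing condition $\sum_{e\ni V}v(e,V)=0$ holds. $\mathcal M^{\mathrm{lab}}_{0,n}(\mathbb R^2,d)$ is the tropical moduli space of such curves (a polyhedral fan of dimension $3d-1+n$), and $\mathcal M_{0,n}(\mathbb R^2,d)$ is the analogous space where the non-contracted ends carry no labels. The evaluation map is $\mathrm{ev}=(\mathrm{ev}_1,\dots,\mathrm{ev}_n):\mathcal M^{\mathrm{lab}}_{0,n}(\mathbb R^2,d)\to\mathbb R^{2n}$, $\mathrm{ev}_k(C)=h(x_k)$. $\psi_k$ denotes the tropical Psi-class at the $k$-th marked end, and $\prod_k\psi_k^{r_k}\cdot\mathcal M^{\mathrm{lab}}_{0,n}(\mathbb R^2,d)$ the tropical intersection product, a tropical cycle of dimension $3d-1+n-\sum_k r_k$. Coordinates and determinant. On a cell of curves of fixed combinatorial type, choose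 a root vertex $V_0$; coordinates are $h(V_0)\in\mathbb R^2$ and the lengths $\ell(e)$ of the bounded edges. Then $\mathrm{ev}_k=h(V_0)+\sum_{e}\ell(e)\,v(e)$, summing over bounded edges on the path from $V_0$ to $x_k$ with $v(e)$ the direction vector pointing away from $V_0$; so $\mathrm{ev}$ is linear on the cell. When the number of coordinates equals $2n$, $\det_{C'}(\mathrm{ev})$ denotes the determinant of this linear map (its absolute value is independent of choices). A string of $\Gamma$ is a subgraph homeomorphic to $\mathbb R$ (a path from one non-contracted end to another) not meeting the closure of any marked end. The multiplicity of a $3$-valent vertex $V$ with two adjacent edges of direction vectors $v_1,v_2$ (pointing away from $V$) is $\mathrm{mult}(V)=|\det(v_1,v_2)|$. For an unlabelled curve $C$, let $V_1,\dots,V_t$ be its vertices and $b_{ij}$ the number of non-contracted ends of direction $-e_j$ adjacent to $V_i$ ($j=0,1,2$, with $e_0=-e_1-e_2$, $e_1,e_2$ the standard basis); set $\nu_C=\prod_{i}\prod_{j}\frac{1}{b_{ij}!}$. Define $\mathrm{mult}(C)$ as $\nu_C$ times the product of $\mathrm{mult}(V)$ over all $3$-valent vertices $V$ not adjacent to a marked end. *)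

theory Defs
  imports "HOL-Library.Product_Plus" "Jordan_Normal_Form.Determinant"
begin

text \<open>Combinatorial model of a labelled parametrized rational tropical curve in R^2.
  Vertices: a finite set Vs of an arbitrary type. Bounded edges: a set E of two-element
  vertex sets. dir u w: direction vector of the bounded edge {u,w} pointing away from u.
  Non-contracted ends are indexed by i < 3d: endv i is the adjacent vertex and enddir i
  its direction vector. Marked (contracted) ends x_1..x_n are indexed by k < n and
  mk k is the vertex adjacent to x_(k+1). len gives the lengths of bounded edges.\<close>

definition is_path :: "'v set set \<Rightarrow> 'v list \<Rightarrow> 'v \<Rightarrow> 'v \<Rightarrow> bool" where
  "is_path E ps a b \<longleftrightarrow> ps \<noteq> [] \<and> hd ps = a \<and> last ps = b \<and> distinct ps \<and>
     (\<forall>t. Suc t < length ps \<longrightarrow> {ps ! t, ps ! Suc t} \<in> E)"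

definition is_tree :: "'v set \<Rightarrow> 'v set set \<Rightarrow> bool" where
  "is_tree Vs E \<longleftrightarrow> finite Vs \<and> Vs \<noteq> {} \<and>
     E \<subseteq> {{a, b} | a b. a \<in> Vs \<and> b \<in> Vs \<and> a \<noteq> b} \<and>
     (\<forall>a\<in>Vs. \<forall>b\<in>Vs. \<exists>ps. is_path E ps a b) \<and>
     card E + 1 = card Vs"

definition tree_path :: "'v set set \<Rightarrow> 'v \<Rightarrow> 'v \<Rightarrow> 'v list" where
  "tree_path E a b = (THE ps. is_path E ps a b)"

definition nbrs :: "'v set set \<Rightarrow> 'v \<Rightarrow> 'v set" where
  "nbrs E v = {w. {v, w} \<in> E}"

definition valence :: "nat \<Rightarrow> nat \<Rightarrow> 'v set set \<Rightarrow> (nat \<Rightarrow> 'v) \<Rightarrow> (nat \<Rightarrow> 'v) \<Rightarrow> 'v \<Rightarrow> nat" where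
  "valence d n E endv mk v =
     card (nbrs E v) + card {i. i < 3 * d \<and> endv i = v} + card {k. k < n \<and> mk k = v}"

definition is_lab_curve ::
  "nat \<Rightarrow> nat \<Rightarrow> 'v set \<Rightarrow> 'v set set \<Rightarrow> ('v \<Rightarrow> 'v \<Rightarrow> int \<times> int) \<Rightarrow>
   (nat \<Rightarrow> 'v) \<Rightarrow> (nat \<Rightarrow> int \<times> int) \<Rightarrow> (nat \<Rightarrow> 'v) \<Rightarrow> ('v set \<Rightarrow> real) \<Rightarrow> bool" where
  "is_lab_curve d n Vs E dir endv enddir mk len \<longleftrightarrow>
     is_tree Vs E \<and>
     (\<forall>u w. {u, w} \<in> E \<longrightarrow> dir w u = - dir u w) \<and>
     (\<forall>e\<in>E. len e > 0) \<and>
     (\<forall>i<3 * d. endv i \<in> Vs \<and> enddir i \<in> {(-1, 0), (0, -1), (1, 1)}) \<and>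
     card {i. i < 3 * d \<and> enddir i = (-1, 0)} = d \<and>
     card {i. i < 3 * d \<and> enddir i = (0, -1)} = d \<and>
     card {i. i < 3 * d \<and> enddir i = (1, 1)} = d \<and>
     (\<forall>k<n. mk k \<in> Vs) \<and>
     (\<forall>v\<in>Vs. 3 \<le> valence d n E endv mk v) \<and>
     (\<forall>v\<in>Vs. (\<Sum>w\<in>nbrs E v. dir v w) + (\<Sum>i\<in>{i. i < 3 * d \<and> endv i = v}. enddir i) = 0)"

text \<open>A string: a path between two distinct non-contracted ends avoiding the closures of
  all marked ends (i.e. avoiding all vertices adjacent to a marked end).\<close>
definition has_string ::
  "nat \<Rightarrow> nat \<Rightarrow> 'v set set \<Rightarrow> (nat \<Rightarrow> 'v) \<Rightarrow> (nat \<Rightarrow> 'v) \<Rightarrow> bool" where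
  "has_string d n E endv mk \<longleftrightarrow>
     (\<exists>i j ps. i < 3 * d \<and> j < 3 * d \<and> i \<noteq> j \<and> is_path E ps (endv i) (endv j) \<and>
        (\<forall>x\<in>set ps. x \<notin> mk ` {..<n}))"

definition comp2 :: "nat \<Rightarrow> int \<times> int \<Rightarrow> int" where
  "comp2 c v = (if c = 0 then fst v else snd v)"

text \<open>Matrix of ev in the coordinates (h(V0), lengths of bounded edges), with bounded edges
  enumerated by eo (column j+2 is edge eo j) and rows (k,c) enumerated as 2k+c.\<close>
definition ev_matrix ::
  "nat \<Rightarrow> 'v set set \<Rightarrow> ('v \<Rightarrow> 'v \<Rightarrow> int \<times> int) \<Rightarrow> (nat \<Rightarrow> 'v) \<Rightarrow> 'v \<Rightarrow>
   (nat \<Rightarrow> 'v set) \<Rightarrow> real mat" where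
  "ev_matrix n E dir mk V0 eo = mat (2 * n) (2 * n) (\<lambda>(i, j).
      if j < 2 then (if j = i mod 2 then 1 else 0)
      else (let ps = tree_path E V0 (mk (i div 2)) in
            of_int (\<Sum>t<length ps - 1.
               if {ps ! t, ps ! Suc t} = eo (j - 2) then comp2 (i mod 2) (dir (ps ! t) (ps ! Suc t))
               else 0)))"

definition det2 :: "int \<times> int \<Rightarrow> int \<times> int \<Rightarrow> int" where
  "det2 a b = fst a * snd b - snd a * fst b"

text \<open>Adjacent edges of a vertex (bounded edges Inl w, non-contracted ends Inr i) and their
  direction vectors pointing away from the vertex.\<close>
definition adj_edges :: "nat \<Rightarrow> 'v set set \<Rightarrow> (nat \<Rightarrow> 'v) \<Rightarrow> 'v \<Rightarrow> ('v + nat) set" where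
  "adj_edges d E endv v = Inl ` nbrs E v \<union> Inr ` {i. i < 3 * d \<and> endv i = v}"

definition out_dir :: "('v \<Rightarrow> 'v \<Rightarrow> int \<times> int) \<Rightarrow> (nat \<Rightarrow> int \<times> int) \<Rightarrow> 'v \<Rightarrow> 'v + nat \<Rightarrow> int \<times> int" where
  "out_dir dir enddir v a = (case a of Inl w \<Rightarrow> dir v w | Inr i \<Rightarrow> enddir i)"

definition vertex_mult ::
  "nat \<Rightarrow> 'v set set \<Rightarrow> ('v \<Rightarrow> 'v \<Rightarrow> int \<times> int) \<Rightarrow> (nat \<Rightarrow> 'v) \<Rightarrow> (nat \<Rightarrow> int \<times> int) \<Rightarrow> 'v \<Rightarrow> int" where
  "vertex_mult d E dir endv enddir v =
     (SOME m. \<exists>a\<in>adj_edges d E endv v. \<exists>b\<in>adj_edges d E endv v. a \<noteq> b \<and>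
        m = \<bar>det2 (out_dir dir enddir v a) (out_dir dir enddir v b)\<bar>)"

text \<open>nu_C: product over vertices V and j of 1/b_ij!, b_ij = number of non-contracted ends
  of direction -e_j at V (-e_0 = (1,1), -e_1 = (-1,0), -e_2 = (0,-1)).\<close>
definition nu_C :: "nat \<Rightarrow> 'v set \<Rightarrow> (nat \<Rightarrow> 'v) \<Rightarrow> (nat \<Rightarrow> int \<times> int) \<Rightarrow> real" where
  "nu_C d Vs endv enddir = (\<Prod>v\<in>Vs. \<Prod>\<delta>\<in>{(1, 1), (-1, 0), (0, -1)}.
      1 / fact (card {i. i < 3 * d \<and> endv i = v \<and> enddir i = \<delta>}))"

definition mult_C ::
  "nat \<Rightarrow> nat \<Rightarrow> 'v set \<Rightarrow> 'v set set \<Rightarrow> ('v \<Rightarrow> 'v \<Rightarrow> int \<times> int) \<Rightarrow> (nat \<Rightarrow> 'v) \<Rightarrow>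
   (nat \<Rightarrow> int \<times> int) \<Rightarrow> (nat \<Rightarrow> 'v) \<Rightarrow> real" where
  "mult_C d n Vs E dir endv enddir mk = nu_C d Vs endv enddir *
     (\<Prod>v\<in>{v\<in>Vs. valence d n E endv mk v = 3 \<and> v \<notin> mk ` {..<n}}.
        of_int (vertex_mult d E dir endv enddir v))"

end

theory Submission
  imports Defs
begin

(* Let M be the set of vertices carrying a marked end.  Counting flags, the
   valence hypotheses and |V| = |E| + 1 give |E| = 2n - 2 (curve_edge_count), so the matrix of
   ev is square of size 2n.  Its rows are indexed by pairs (marked vertex, coordinate) and its
   columns by the two coordinates of h(V0) and the bounded edges, so we work with absolute
   determinants of matrices indexed by finite sets; its entries are coordinates of edge
   directions along tree paths from V0.
   Forgetting the ends of a string-free curve leaves a "string-free marked tree":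
   unmarked vertices have two or three bounded edges, are balanced in the latter case, and no
   path of unmarked vertices joins two bivalent ones.  Away from the root V0 such a tree contains
   a removable configuration -- a marked leaf on a marked vertex, a marked leaf on a bivalent
   unmarked vertex, or a cherry of two marked leaves -- whose removal leaves a smaller
   string-free marked tree; this gives an induction principle.  It first yields
   |V - M| + 1 <= |M|, which rules out the first configuration when |E| + 2 = 2|M|.  In the other
   two cases a row operation and a block decomposition split off a 2x2 minor equal to the
   multiplicity of the unmarked vertex, so |det ev| is the product of these multiplicities
   (ev_det_string_free_tree). *)

section \<open>Absolute determinants of matrices indexed by finite sets\<close>

text \<open>Its determinant depends on enumerations of
  R and C only up to sign, so the absolute value is well defined.\<close>

definition index_mat :: "nat \<Rightarrow> (nat \<Rightarrow> 'r) \<Rightarrow> (nat \<Rightarrow> 'c) \<Rightarrow> ('r \<Rightarrow> 'c \<Rightarrow> real) \<Rightarrow> real mat" where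
  "index_mat N f g A = mat N N (\<lambda>(i, j). A (f i) (g j))"

definition abs_det_on :: "'r set \<Rightarrow> 'c set \<Rightarrow> ('r \<Rightarrow> 'c \<Rightarrow> real) \<Rightarrow> real" where
  "abs_det_on R C A = \<bar>det (index_mat (card R) (SOME f. bij_betw f {..<card R} R)
      (SOME g. bij_betw g {..<card R} C) A)\<bar>"

lemma ex_enumeration: "finite C \<Longrightarrow> card C = N \<Longrightarrow> \<exists>f. bij_betw f {..<N} C"
  by (metis ex_bij_betw_nat_finite lessThan_atLeast0)

lemma enumerations_permutation:
  assumes f1: "bij_betw f1 {..<(N::nat)} R" and f2: "bij_betw f2 {..<N} R"
  obtains p where "p permutes {0..<N}" and "\<And>i. i < N \<Longrightarrow> f1 (p i) = f2 i"
proof -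
  define p where "p = (\<lambda>i. if i < N then inv_into {..<N} f1 (f2 i) else i)"
  have "bij_betw (inv_into {..<N} f1 \<circ> f2) {..<N} {..<N}"
    using bij_betw_trans[OF f2 bij_betw_inv_into[OF f1]] .
  then have "bij_betw p {..<N} {..<N}"
    by (rule bij_betw_cong[THEN iffD1, rotated]) (auto simp: p_def)
  then have "p permutes {..<N}"
    by (intro bij_imp_permutes) (auto simp: p_def)
  moreover have "f1 (p i) = f2 i" if "i < N" for i
  proof -
    have "f2 i \<in> f1 ` {..<N}" using that f1 f2 by (auto simp: bij_betw_def)
    then show ?thesis using that unfolding p_def by (simp add: f_inv_into_f)
  qed
  ultimately show ?thesis by (intro that) (simp_all add: atLeast0LessThan)
qed

lemma abs_det_reenumerate_rows:
  assumes f1: "bij_betw f1 {..<(N::nat)} R" and f2: "bij_betw f2 {..<N} R"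
  shows "\<bar>det (index_mat N f2 g A)\<bar> = \<bar>det (index_mat N f1 g A)\<bar>"
proof -
  obtain p where p: "p permutes {0..<N}" and pf: "\<And>i. i < N \<Longrightarrow> f1 (p i) = f2 i"
    using enumerations_permutation[OF f1 f2] by blast
  have pN: "i < N \<Longrightarrow> p i < N" for i
    using p by (metis atLeastLessThan_iff permutes_in_image zero_le)
  have "index_mat N f2 g A = mat N N (\<lambda>(i, j). index_mat N f1 g A $$ (p i, j))"
    by (rule eq_matI) (auto simp: index_mat_def pN pf)
  also have "det \<dots> = signof p * det (index_mat N f1 g A)"
    by (rule det_permute_rows[OF _ p]) (simp add: index_mat_def)
  finally show ?thesis
    by (cases p rule: sign_cases) (auto simp: abs_mult)
qed

lemma abs_det_reenumerate_cols:
  assumes g1: "bij_betw g1 {..<N} C" and g2: "bij_betw g2 {..<N} C"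
  shows "\<bar>det (index_mat N f g2 A)\<bar> = \<bar>det (index_mat N f g1 A)\<bar>"
proof -
  have transp: "transpose_mat (index_mat N f g A) = index_mat N g f (\<lambda>c r. A r c)" for g
    by (rule eq_matI) (auto simp: index_mat_def)
  have "det (index_mat N f g A) = det (index_mat N g f (\<lambda>c r. A r c))" for g
    by (metis det_transpose index_mat_def mat_carrier transp)
  then show ?thesis using abs_det_reenumerate_rows[OF g1 g2] by metis
qed

lemma abs_det_on_eq:
  assumes f: "bij_betw f {..<N} R" and g: "bij_betw g {..<N} C"
  shows "abs_det_on R C A = \<bar>det (index_mat N f g A)\<bar>"
proof -
  have N: "card R = N" using bij_betw_same_card[OF f] by simp
  have s1: "bij_betw (SOME f. bij_betw f {..<card R} R) {..<N} R"
    using someI_ex[of "\<lambda>f. bij_betw f {..<card R} R"] f N by blast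
  have s2: "bij_betw (SOME g. bij_betw g {..<card R} C) {..<N} C"
    using someI_ex[of "\<lambda>g. bij_betw g {..<card R} C"] g N by blast
  show ?thesis unfolding abs_det_on_def N
    using abs_det_reenumerate_rows[OF f s1, of "SOME g. bij_betw g {..<N} C" A]
      abs_det_reenumerate_cols[OF g s2, of f A] by (simp add: N)
qed

lemma abs_det_on_cong:
  assumes "finite R" "finite C" "card C = card R"
    and "\<And>r c. r \<in> R \<Longrightarrow> c \<in> C \<Longrightarrow> A r c = B r c"
  shows "abs_det_on R C A = abs_det_on R C B"
proof -
  obtain f g where f: "bij_betw f {..<card R} R" and g: "bij_betw g {..<card R} C"
    using ex_enumeration assms(1-3) by metis
  have "index_mat (card R) f g A = index_mat (card R) f g B"
    using f g assms(4) by (intro eq_matI) (auto simp: index_mat_def bij_betw_def)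
  then show ?thesis using abs_det_on_eq[OF f g] by simp
qed

lemma bij_concat:
  assumes f1: "bij_betw f1 {..<(N1::nat)} R1" and f2: "bij_betw f2 {..<N2} R2"
    and disj: "R1 \<inter> R2 = {}"
  shows "bij_betw (\<lambda>i. if i < N1 then f1 i else f2 (i - N1)) {..<N1 + N2} (R1 \<union> R2)"
proof -
  have "bij_betw (\<lambda>i. i - N1) {N1..<N1 + N2} {..<N2}"
    by (rule bij_betw_byWitness[where f' = "\<lambda>i. i + N1"]) auto
  then have "bij_betw (\<lambda>i. if i \<in> {..<N1} then f1 i else (f2 \<circ> (\<lambda>i. i - N1)) i)
      ({..<N1} \<union> {N1..<N1 + N2}) (R1 \<union> R2)"
    by (rule bij_betw_disjoint_Un[OF f1 bij_betw_trans[OF _ f2] _ disj]) auto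
  moreover have "{..<N1} \<union> {N1..<N1 + N2} = {..<N1 + N2}" by auto
  moreover have "(\<lambda>i. if i \<in> {..<N1} then f1 i else (f2 \<circ> (\<lambda>i. i - N1)) i)
      = (\<lambda>i. if i < N1 then f1 i else f2 (i - N1))" by auto
  ultimately show ?thesis by simp
qed

lemma abs_det_on_block:
  assumes fin: "finite R1" "finite R2" "finite C1" "finite C2"
    and disj: "R1 \<inter> R2 = {}" "C1 \<inter> C2 = {}"
    and card: "card C1 = card R1" "card C2 = card R2"
    and zero: "\<And>r c. r \<in> R1 \<Longrightarrow> c \<in> C2 \<Longrightarrow> A r c = 0"
  shows "abs_det_on (R1 \<union> R2) (C1 \<union> C2) A = abs_det_on R1 C1 A * abs_det_on R2 C2 A"
proof -
  define N1 N2 where "N1 = card R1" and "N2 = card R2"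
  obtain f1 g1 where f1: "bij_betw f1 {..<N1} R1" and g1: "bij_betw g1 {..<N1} C1"
    using ex_enumeration fin card N1_def by metis
  obtain f2 g2 where f2: "bij_betw f2 {..<N2} R2" and g2: "bij_betw g2 {..<N2} C2"
    using ex_enumeration fin card N2_def by metis
  let ?f = "\<lambda>i. if i < N1 then f1 i else f2 (i - N1)"
  let ?g = "\<lambda>i. if i < N1 then g1 i else g2 (i - N1)"
  let ?low = "mat N2 N1 (\<lambda>(i, j). A (f2 i) (g1 j))"
  have "index_mat (N1 + N2) ?f ?g A =
      four_block_mat (index_mat N1 f1 g1 A) (0\<^sub>m N1 N2) ?low (index_mat N2 f2 g2 A)"
  proof (rule eq_matI)
    fix i j assume "i < dim_row (four_block_mat (index_mat N1 f1 g1 A) (0\<^sub>m N1 N2) ?low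
        (index_mat N2 f2 g2 A))" "j < dim_col (four_block_mat (index_mat N1 f1 g1 A)
        (0\<^sub>m N1 N2) ?low (index_mat N2 f2 g2 A))"
    moreover have "A (f1 i) (g2 (j - N1)) = 0" if "i < N1" "\<not> j < N1" "j < N1 + N2"
      using zero that f1 g2 by (auto simp: bij_betw_def)
    ultimately show "index_mat (N1 + N2) ?f ?g A $$ (i, j) = four_block_mat
        (index_mat N1 f1 g1 A) (0\<^sub>m N1 N2) ?low (index_mat N2 f2 g2 A) $$ (i, j)"
      by (auto simp: index_mat_def)
  qed (auto simp: index_mat_def)
  moreover have "det (four_block_mat (index_mat N1 f1 g1 A) (0\<^sub>m N1 N2) ?low
      (index_mat N2 f2 g2 A)) = det (index_mat N1 f1 g1 A) * det (index_mat N2 f2 g2 A)"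
    by (rule det_four_block_mat_upper_right_zero) (auto simp: index_mat_def)
  ultimately show ?thesis
    using abs_det_on_eq[OF bij_concat[OF f1 f2 disj(1)] bij_concat[OF g1 g2 disj(2)], of A]
      abs_det_on_eq[OF f1 g1, of A] abs_det_on_eq[OF f2 g2, of A]
    by (simp add: abs_mult)
qed

lemma abs_det_on_subtract_row:
  assumes fin: "finite R" "finite C" "card C = card R"
    and rows: "r1 \<in> R" "r0 \<in> R" "r1 \<noteq> r0"
  shows "abs_det_on R C (\<lambda>r c. if r = r1 then A r1 c - A r0 c else A r c) = abs_det_on R C A"
proof -
  define N where "N = card R"
  obtain f g where f: "bij_betw f {..<N} R" and g: "bij_betw g {..<N} C"
    using ex_enumeration fin N_def by metis
  define k l where "k = inv_into {..<N} f r1" and "l = inv_into {..<N} f r0"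
  have k: "k < N" "f k = r1" and l: "l < N" "f l = r0"
    using f rows unfolding k_def l_def bij_betw_def by (auto intro: inv_into_into f_inv_into_f)
  have fk: "i < N \<Longrightarrow> f i = r1 \<longleftrightarrow> i = k" for i
    using f k unfolding bij_betw_def inj_on_def by auto
  have "index_mat N f g (\<lambda>r c. if r = r1 then A r1 c - A r0 c else A r c)
      = addrow (- 1) k l (index_mat N f g A)"
    by (rule eq_matI) (auto simp: index_mat_def mat_addrow_def k l fk)
  moreover have "k \<noteq> l" using k l rows by auto
  ultimately show ?thesis
    using det_addrow[OF l(1), of k "index_mat N f g A" "- 1"] abs_det_on_eq[OF f g]
    by (simp add: index_mat_def)
qed

lemma abs_det_on_2x2:
  assumes "r1 \<noteq> r2" "c1 \<noteq> c2"
  shows "abs_det_on {r1, r2} {c1, c2} A = \<bar>A r1 c1 * A r2 c2 - A r1 c2 * A r2 c1\<bar>"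
proof -
  let ?f = "\<lambda>i::nat. if i = 0 then r1 else r2"
  let ?g = "\<lambda>i::nat. if i = 0 then c1 else c2"
  have lt2: "{..<2::nat} = {0, 1}" by auto
  have f: "bij_betw ?f {..<2} {r1, r2}" and g: "bij_betw ?g {..<2} {c1, c2}"
    unfolding lt2 using assms by (auto simp: bij_betw_def inj_on_def)
  let ?M = "index_mat 2 ?f ?g A"
  have M: "?M \<in> carrier_mat 2 2" by (simp add: index_mat_def)
  have "det ?M = (\<Sum>i<2. ?M $$ (i, 0) * cofactor ?M i 0)"
    by (rule laplace_expansion_column[OF M]) simp
  also have "\<dots> = A r1 c1 * A r2 c2 - A r2 c1 * A r1 c2"
    by (simp add: index_mat_def lt2 cofactor_def det_single mat_delete_def)
  finally show ?thesis using abs_det_on_eq[OF f g, of A] by (simp add: algebra_simps)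
qed

lemma abs_det_on_rename_rows:
  assumes fin: "finite R" "finite C" "card C = card R" and inj: "inj_on h R"
    and eq: "\<And>r c. r \<in> R \<Longrightarrow> c \<in> C \<Longrightarrow> B (h r) c = A r c"
  shows "abs_det_on (h ` R) C B = abs_det_on R C A"
proof -
  obtain f g where f: "bij_betw f {..<card R} R" and g: "bij_betw g {..<card R} C"
    using ex_enumeration fin by metis
  have hf: "bij_betw (h \<circ> f) {..<card R} (h ` R)"
    using bij_betw_trans[OF f inj_on_imp_bij_betw[OF inj]] .
  have "index_mat (card R) (h \<circ> f) g B = index_mat (card R) f g A"
    using f g eq by (intro eq_matI) (auto simp: index_mat_def bij_betw_def)
  then show ?thesis using abs_det_on_eq[OF f g, of A] abs_det_on_eq[OF hf g, of B] by simp
qed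

section \<open>Paths in trees\<close>

definition wf_edges :: "'v set \<Rightarrow> 'v set set \<Rightarrow> bool" where
  "wf_edges Vs E \<longleftrightarrow> E \<subseteq> {{a, b} | a b. a \<in> Vs \<and> b \<in> Vs \<and> a \<noteq> b}"

lemma tree_wf: "is_tree Vs E \<Longrightarrow> wf_edges Vs E"
  by (simp add: is_tree_def wf_edges_def)

lemma wf_edgeD: "wf_edges Vs E \<Longrightarrow> {x, y} \<in> E \<Longrightarrow> x \<in> Vs \<and> y \<in> Vs \<and> x \<noteq> y"
  unfolding wf_edges_def by (auto simp: doubleton_eq_iff)

lemma is_path_single [simp]: "is_path E [a] a a"
  by (simp add: is_path_def)

lemma is_path_same: assumes "is_path E ps a a" shows "ps = [a]"
proof -
  have ne: "ps \<noteq> []" and h: "hd ps = a" and l: "last ps = a" and d: "distinct ps"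
    using assms by (auto simp: is_path_def)
  show ?thesis
  proof (cases "length ps \<ge> 2")
    case True
    have "ps ! 0 = ps ! (length ps - 1)" using h l ne by (simp add: hd_conv_nth last_conv_nth)
    then have "0 = length ps - 1" using d True nth_eq_iff_index_eq[OF d] by force
    then show ?thesis using True by simp
  next
    case False
    then have "length ps = 1" using ne by (cases ps) (auto simp: Suc_le_eq)
    then show ?thesis using h by (cases ps) auto
  qed
qed

lemma is_path_rev: assumes "is_path E ps a b" shows "is_path E (rev ps) b a"
  unfolding is_path_def
proof (intro conjI allI impI)
  show "rev ps \<noteq> []" "hd (rev ps) = b" "last (rev ps) = a" "distinct (rev ps)"
    using assms by (auto simp: is_path_def hd_rev last_rev)
  fix t assume t: "Suc t < length (rev ps)"
  let ?n = "length ps"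
  have "{ps ! (?n - 2 - t), ps ! Suc (?n - 2 - t)} \<in> E"
    using assms t unfolding is_path_def by auto
  moreover have "rev ps ! t = ps ! Suc (?n - 2 - t)" "rev ps ! Suc t = ps ! (?n - 2 - t)"
    using t by (auto simp: rev_nth Suc_diff_Suc numeral_2_eq_2)
  ultimately show "{rev ps ! t, rev ps ! Suc t} \<in> E" by (simp add: insert_commute)
qed

lemma is_path_snoc:
  assumes "is_path E ps a b" "{b, c} \<in> E" "c \<notin> set ps"
  shows "is_path E (ps @ [c]) a c"
  unfolding is_path_def
proof (intro conjI allI impI)
  show "ps @ [c] \<noteq> []" "last (ps @ [c]) = c" by auto
  show "hd (ps @ [c]) = a" "distinct (ps @ [c])" using assms by (auto simp: is_path_def)
  fix t assume t: "Suc t < length (ps @ [c])"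
  show "{(ps @ [c]) ! t, (ps @ [c]) ! Suc t} \<in> E"
  proof (cases "Suc t < length ps")
    case True then show ?thesis using assms by (auto simp: is_path_def nth_append)
  next
    case False
    then have "t = length ps - 1" "ps \<noteq> []" using t assms by (auto simp: is_path_def)
    then show ?thesis using assms False by (auto simp: is_path_def nth_append last_conv_nth)
  qed
qed

lemma is_path_cons:
  assumes "is_path E ps a b" "{c, a} \<in> E" "c \<notin> set ps"
  shows "is_path E (c # ps) c b"
proof -
  have "is_path E (rev ps @ [c]) b c"
    using is_path_snoc[OF is_path_rev[OF assms(1)]] assms(2,3) by (simp add: insert_commute)
  then show ?thesis using is_path_rev by fastforce
qed

lemma is_path_take:
  assumes "is_path E ps a b" "i < length ps"
  shows "is_path E (take (Suc i) ps) a (ps ! i)"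
  unfolding is_path_def
proof (intro conjI allI impI)
  show "take (Suc i) ps \<noteq> []" "distinct (take (Suc i) ps)" "hd (take (Suc i) ps) = a"
    using assms by (auto simp: is_path_def hd_take)
  show "last (take (Suc i) ps) = ps ! i" using assms(2)
    by (simp add: take_Suc_conv_app_nth)
  fix t assume "Suc t < length (take (Suc i) ps)"
  then show "{take (Suc i) ps ! t, take (Suc i) ps ! Suc t} \<in> E"
    using assms unfolding is_path_def by auto
qed

lemma is_path_mono:
  assumes "is_path E ps a b" "\<And>t. Suc t < length ps \<Longrightarrow> {ps ! t, ps ! Suc t} \<in> E'"
  shows "is_path E' ps a b"
  using assms unfolding is_path_def by auto

lemma is_path_remove_leaf_edge:
  assumes "is_path E ps a b" "L \<notin> set ps"
  shows "is_path (E - {{L, P}}) ps a b"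
proof (rule is_path_mono[OF assms(1)])
  fix t assume t: "Suc t < length ps"
  have "{ps ! t, ps ! Suc t} \<in> E" using assms(1) t unfolding is_path_def by auto
  moreover have "ps ! t \<noteq> L" "ps ! Suc t \<noteq> L" using assms(2) t by (auto simp: in_set_conv_nth)
  ultimately show "{ps ! t, ps ! Suc t} \<in> E - {{L, P}}" by (auto simp: doubleton_eq_iff)
qed

lemma is_path_butlast:
  assumes "is_path E ps a b" "a \<noteq> b"
  shows "is_path E (butlast ps) a (last (butlast ps))" "{last (butlast ps), b} \<in> E"
    "ps = butlast ps @ [b]" "b \<notin> set (butlast ps)"
proof -
  have ne: "ps \<noteq> []" and l: "last ps = b" and d: "distinct ps" and h: "hd ps = a"
    using assms by (auto simp: is_path_def)
  show ps: "ps = butlast ps @ [b]" using ne l append_butlast_last_id by metis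
  have len: "length ps \<ge> 2"
  proof (rule ccontr)
    assume "\<not> 2 \<le> length ps"
    then have "length ps = 1" using ne by (cases ps) (auto simp: Suc_le_eq numeral_2_eq_2)
    then show False using h l assms(2) by (cases ps) auto
  qed
  have bl: "butlast ps = take (Suc (length ps - 2)) ps"
    using len by (simp add: butlast_conv_take Suc_diff_Suc numeral_2_eq_2)
  have "is_path E (take (Suc (length ps - 2)) ps) a (ps ! (length ps - 2))"
    by (rule is_path_take[OF assms(1)]) (use len in auto)
  moreover have "last (butlast ps) = ps ! (length ps - 2)"
    using len by (simp add: bl take_Suc_conv_app_nth)
  ultimately show "is_path E (butlast ps) a (last (butlast ps))" by (simp add: bl)
  have "{ps ! (length ps - 2), ps ! Suc (length ps - 2)} \<in> E"
    using assms(1) len unfolding is_path_def by auto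
  moreover have "ps ! Suc (length ps - 2) = b" using len l ne
    by (simp add: last_conv_nth Suc_diff_Suc numeral_2_eq_2)
  ultimately show "{last (butlast ps), b} \<in> E" using \<open>last (butlast ps) = _\<close> by simp
  show "b \<notin> set (butlast ps)" using d ps by (metis distinct_append not_distinct_conv_prefix)
qed

lemma is_path_in_Vs:
  assumes "wf_edges Vs E" "is_path E ps a b" "a \<in> Vs"
  shows "set ps \<subseteq> Vs"
proof
  fix x assume "x \<in> set ps"
  then obtain i where i: "i < length ps" "ps ! i = x" by (auto simp: in_set_conv_nth)
  show "x \<in> Vs"
  proof (cases "Suc i < length ps")
    case True
    then show ?thesis using assms(1,2) i wf_edgeD by (fastforce simp: is_path_def)
  next
    case False
    show ?thesis
    proof (cases i)
      case 0 then show ?thesis using assms i by (auto simp: is_path_def hd_conv_nth)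
    next
      case (Suc j)
      then have "{ps ! j, ps ! Suc j} \<in> E" using assms(2) i unfolding is_path_def by auto
      then show ?thesis using wf_edgeD[OF assms(1)] i Suc by auto
    qed
  qed
qed

lemma is_path_ends_in_Vs:
  assumes "wf_edges Vs E" "is_path E ps a b" "a \<noteq> b"
  shows "a \<in> Vs" "b \<in> Vs"
proof -
  have "{last (butlast ps), b} \<in> E" by (rule is_path_butlast(2)[OF assms(2,3)])
  then show "b \<in> Vs" using wf_edgeD[OF assms(1)] by auto
  have "is_path E (rev ps) b a" by (rule is_path_rev[OF assms(2)])
  then have "{last (butlast (rev ps)), a} \<in> E" using is_path_butlast(2) assms(3) by metis
  then show "a \<in> Vs" using wf_edgeD[OF assms(1)] by auto
qed

lemma leaf_not_interior:
  assumes "is_path E ps a b" "nbrs E L \<subseteq> {P}" "L \<in> set ps"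
  shows "L = a \<or> L = b"
proof (rule ccontr)
  assume nab: "\<not> (L = a \<or> L = b)"
  have ne: "ps \<noteq> []" and h: "hd ps = a" and l: "last ps = b" and d: "distinct ps"
    using assms by (auto simp: is_path_def)
  obtain i where i: "i < length ps" "ps ! i = L" using assms(3) by (auto simp: in_set_conv_nth)
  have i0: "i \<noteq> 0" using i h nab ne by (metis hd_conv_nth)
  have i1: "Suc i < length ps"
  proof (rule ccontr)
    assume "\<not> Suc i < length ps"
    then have "i = length ps - 1" using i by simp
    then show False using i l nab ne by (auto simp: last_conv_nth)
  qed
  obtain j where j: "i = Suc j" using i0 by (cases i) auto
  have "{ps ! j, L} \<in> E" using assms(1) i j unfolding is_path_def by auto
  then have "ps ! j \<in> nbrs E L" by (simp add: nbrs_def insert_commute)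
  moreover have "{L, ps ! Suc i} \<in> E" using assms(1) i i1 unfolding is_path_def by auto
  then have "ps ! Suc i \<in> nbrs E L" by (simp add: nbrs_def)
  moreover have "ps ! j \<noteq> ps ! Suc i" using d i1 j by (simp add: nth_eq_iff_index_eq)
  ultimately show False using assms(2) by auto
qed

lemma nbrs_finite: "wf_edges Vs E \<Longrightarrow> finite Vs \<Longrightarrow> finite (nbrs E v)"
  by (rule finite_subset[of _ Vs]) (auto simp: nbrs_def dest: wf_edgeD)

lemma handshake:
  assumes "finite Vs" "wf_edges Vs E"
  shows "(\<Sum>v\<in>Vs. card (nbrs E v)) = 2 * card E"
proof -
  have fE: "finite E"
  proof -
    have "E \<subseteq> Pow Vs" using assms(2) unfolding wf_edges_def by auto
    then show ?thesis using assms(1) by (meson finite_Pow_iff finite_subset)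
  qed
  define F where "F e = {(v, w). {v, w} = e}" for e :: "'a set"
  have S: "(SIGMA v:Vs. nbrs E v) = (\<Union>e\<in>E. F e)"
    using assms(2) by (auto simp: F_def nbrs_def dest: wf_edgeD)
  have F2: "card (F e) = 2" if eE: "e \<in> E" for e
  proof -
    obtain a b where e: "e = {a, b}" "a \<noteq> b" using eE assms(2) unfolding wf_edges_def by blast
    have "F e = {(a, b), (b, a)}" using e by (auto simp: F_def doubleton_eq_iff)
    then show ?thesis using e by simp
  qed
  have Ffin: "finite (F e)" if "e \<in> E" for e using F2[OF that] card.infinite by fastforce
  have "(\<Sum>v\<in>Vs. card (nbrs E v)) = card (SIGMA v:Vs. nbrs E v)"
    using assms by (simp add: card_SigmaI nbrs_finite)
  also have "\<dots> = card (\<Union>e\<in>E. F e)" by (simp add: S)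
  also have "\<dots> = (\<Sum>e\<in>E. card (F e))"
    by (rule card_UN_disjoint[OF fE]) (use Ffin in \<open>auto simp: F_def\<close>)
  also have "\<dots> = 2 * card E" by (simp add: F2)
  finally show ?thesis .
qed

lemma tree_finite_E: assumes "is_tree Vs E" shows "finite E"
proof -
  have "E \<subseteq> Pow Vs" using assms unfolding is_tree_def by auto
  then show ?thesis using assms by (meson finite_Pow_iff finite_subset is_tree_def)
qed

lemma tree_nbr_exists:
  assumes "is_tree Vs E" "v \<in> Vs" "u \<in> Vs" "u \<noteq> v"
  shows "nbrs E v \<noteq> {}"
proof -
  obtain ps where p: "is_path E ps v u" using assms unfolding is_tree_def by blast
  have "{last (butlast (rev ps)), v} \<in> E"
    using is_path_butlast(2)[OF is_path_rev[OF p]] assms(4) by metis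
  then show ?thesis by (auto simp: nbrs_def insert_commute)
qed

text \<open>Every tree with at least two vertices has a leaf (by the handshake lemma, since
  |E| < |V|).\<close>
lemma tree_leaf_exists:
  assumes "is_tree Vs E" "2 \<le> card Vs"
  shows "\<exists>L\<in>Vs. \<exists>P. nbrs E L = {P}"
proof (rule ccontr)
  assume no: "\<not> ?thesis"
  have fin: "finite Vs" and wf: "wf_edges Vs E" and ce: "card E + 1 = card Vs"
    using assms tree_wf by (auto simp: is_tree_def)
  have "card (nbrs E v) \<ge> 2" if v: "v \<in> Vs" for v
  proof -
    obtain u where u: "u \<in> Vs" "u \<noteq> v"
    proof -
      have "Vs - {v} \<noteq> {}"
      proof
        assume "Vs - {v} = {}" then have "Vs \<subseteq> {v}" by auto
        then have "card Vs \<le> 1" using card_mono[of "{v}" Vs] by simp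
        then show False using assms(2) by simp
      qed
      then show ?thesis using that by blast
    qed
    have ne: "nbrs E v \<noteq> {}" by (rule tree_nbr_exists[OF assms(1) v u(1) u(2)])
    have "card (nbrs E v) \<noteq> 1" using no v by (auto simp: card_1_singleton_iff)
    moreover have "card (nbrs E v) \<noteq> 0" using ne nbrs_finite[OF wf fin] by auto
    ultimately show ?thesis by linarith
  qed
  then have "(\<Sum>v\<in>Vs. 2) \<le> (\<Sum>v\<in>Vs. card (nbrs E v))" by (intro sum_mono) auto
  then have "2 * card Vs \<le> 2 * card E" using handshake[OF fin wf] by simp
  then show False using ce by simp
qed

lemma tree_remove_leaf:
  assumes t: "is_tree Vs E" and L: "L \<in> Vs" and nL: "nbrs E L = {P}"
  shows "is_tree (Vs - {L}) (E - {{L, P}})"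
proof -
  have fin: "finite Vs" and wf: "wf_edges Vs E" and ce: "card E + 1 = card Vs"
    and con: "\<forall>a\<in>Vs. \<forall>b\<in>Vs. \<exists>ps. is_path E ps a b"
    using t tree_wf by (auto simp: is_tree_def)
  have LP: "{L, P} \<in> E" using nL by (auto simp: nbrs_def)
  have P: "P \<in> Vs" "P \<noteq> L" using wf_edgeD[OF wf LP] by auto
  have fE: "finite E" by (rule tree_finite_E[OF t])
  show ?thesis unfolding is_tree_def
  proof (intro conjI ballI)
    show "finite (Vs - {L})" using fin by simp
    show "Vs - {L} \<noteq> {}" using P by auto
    show "E - {{L, P}} \<subseteq> {{a, b} |a b. a \<in> Vs - {L} \<and> b \<in> Vs - {L} \<and> a \<noteq> b}"
    proof
      fix e assume e: "e \<in> E - {{L, P}}"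
      then obtain a b where ab: "e = {a, b}" "a \<in> Vs" "b \<in> Vs" "a \<noteq> b"
        using t unfolding is_tree_def by blast
      have "a \<noteq> L"
      proof
        assume "a = L" then have "b \<in> nbrs E L" using e ab by (auto simp: nbrs_def)
        then show False using nL e ab \<open>a = L\<close> by auto
      qed
      moreover have "b \<noteq> L"
      proof
        assume "b = L" then have "a \<in> nbrs E L" using e ab by (auto simp: nbrs_def insert_commute)
        then show False using nL e ab \<open>b = L\<close> by (auto simp: insert_commute)
      qed
      ultimately show "e \<in> {{a, b} |a b. a \<in> Vs - {L} \<and> b \<in> Vs - {L} \<and> a \<noteq> b}"
        using ab by blast
    qed
    fix a b assume a: "a \<in> Vs - {L}" and b: "b \<in> Vs - {L}"
    obtain ps where ps: "is_path E ps a b" using con a b by blast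
    have nL': "L \<notin> set ps" using leaf_not_interior[OF ps, of L P] nL a b by auto
    have "is_path (E - {{L, P}}) ps a b" by (rule is_path_remove_leaf_edge[OF ps nL'])
    then show "\<exists>ps. is_path (E - {{L, P}}) ps a b" by blast
  next
    show "card (E - {{L, P}}) + 1 = card (Vs - {L})"
    proof -
      have "card E > 0" using LP fE by (auto simp: card_gt_0_iff)
      then show ?thesis using ce LP L fE fin by (simp add: card_Diff_singleton)
    qed
  qed
qed

text \<open>Paths in a tree are unique; by induction on the number of vertices, removing a leaf.\<close>
lemma tree_unique_aux:
  assumes "card Vs = n" "is_tree Vs E" "is_path E p a b" "is_path E q a b"
  shows "p = q"
  using assms
proof (induction n arbitrary: Vs E a b p q rule: less_induct)
  case (less n)
  note t = less.prems(2)
  have wf: "wf_edges Vs E" using t by (rule tree_wf)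
  show ?case
  proof (cases "a = b")
    case True
    then have "p = [a]" "q = [a]" using is_path_same less.prems(3,4) by auto
    then show ?thesis by simp
  next
    case False
    have aV: "a \<in> Vs" "b \<in> Vs" using is_path_ends_in_Vs[OF wf less.prems(3) False] by auto
    have fin: "finite Vs" using t by (simp add: is_tree_def)
    have c2: "2 \<le> card Vs"
    proof -
      have "{a, b} \<subseteq> Vs" using aV by auto
      then have "card {a, b} \<le> card Vs" using fin by (rule card_mono[rotated])
      then show ?thesis using False by simp
    qed
    obtain L P where L: "L \<in> Vs" and nL: "nbrs E L = {P}" using tree_leaf_exists[OF t c2] by blast
    define E' where "E' = E - {{L, P}}"
    have t': "is_tree (Vs - {L}) E'" unfolding E'_def by (rule tree_remove_leaf[OF t L nL])
    have "card (Vs - {L}) < card Vs" by (rule card_Diff1_less[OF fin L])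
    then have cn: "card (Vs - {L}) < n" using less.prems(1) by simp
    have to': "is_path E' ps x y" if "is_path E ps x y" "L \<notin> set ps" for ps x y
      unfolding E'_def by (rule is_path_remove_leaf_edge[OF that])
    have endL: "p' = q'" if p': "is_path E p' x L" and q': "is_path E q' x L" and xL: "x \<noteq> L" for p' q' x
    proof -
      note bp = is_path_butlast[OF p' xL]
      note bq = is_path_butlast[OF q' xL]
      have "last (butlast p') \<in> nbrs E L" using bp(2) by (simp add: nbrs_def insert_commute)
      then have lp: "last (butlast p') = P" using nL by auto
      have "last (butlast q') \<in> nbrs E L" using bq(2) by (simp add: nbrs_def insert_commute)
      then have lq: "last (butlast q') = P" using nL by auto
      have b1: "is_path E' (butlast p') x P" using to'[OF bp(1) bp(4)] lp by simp
      have b2: "is_path E' (butlast q') x P" using to'[OF bq(1) bq(4)] lq by simp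
      have "butlast p' = butlast q'"
        by (rule less.IH[OF cn refl t' b1 b2])
      then show ?thesis using bp(3) bq(3) by (metis (no_types))
    qed
    show ?thesis
    proof (cases "L = b")
      case True then show ?thesis using endL[of p a q] less.prems(3,4) False by simp
    next
      case Lb: False
      show ?thesis
      proof (cases "L = a")
        case True
        have "rev p = rev q" using endL[of "rev p" b "rev q"] is_path_rev[OF less.prems(3)] is_path_rev[OF less.prems(4)]
          True False by simp
        then show ?thesis by simp
      next
        case False
        have "L \<notin> set p" using leaf_not_interior[OF less.prems(3), of L P] nL False Lb by auto
        moreover have "L \<notin> set q" using leaf_not_interior[OF less.prems(4), of L P] nL False Lb by auto
        ultimately show ?thesis using less.IH[OF cn refl t' to'[OF less.prems(3)] to'[OF less.prems(4)]] by simp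
      qed
    qed
  qed
qed

lemma tree_unique: "is_tree Vs E \<Longrightarrow> is_path E p a b \<Longrightarrow> is_path E q a b \<Longrightarrow> p = q"
  by (rule tree_unique_aux[OF refl])

lemma tree_path_is_path:
  assumes "is_tree Vs E" "a \<in> Vs" "b \<in> Vs"
  shows "is_path E (tree_path E a b) a b"
proof -
  obtain ps where ps: "is_path E ps a b" using assms unfolding is_tree_def by blast
  have "\<exists>!ps. is_path E ps a b" using ps tree_unique[OF assms(1)] by blast
  then show ?thesis unfolding tree_path_def by (rule theI')
qed

lemma tree_path_eq:
  assumes "is_tree Vs E" "is_path E ps a b"
  shows "tree_path E a b = ps"
proof -
  have "\<exists>!ps. is_path E ps a b" using assms tree_unique[OF assms(1)] by blast
  then show ?thesis unfolding tree_path_def using assms(2) by (simp add: the1_equality)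
qed

lemma tree_path_remove:
  assumes t: "is_tree Vs E" and L: "L \<in> Vs" and nL: "nbrs E L = {P}"
    and x: "x \<in> Vs - {L}" and y: "y \<in> Vs - {L}"
  shows "tree_path (E - {{L, P}}) x y = tree_path E x y"
proof -
  have t': "is_tree (Vs - {L}) (E - {{L, P}})" by (rule tree_remove_leaf[OF t L nL])
  have p: "is_path (E - {{L, P}}) (tree_path (E - {{L, P}}) x y) x y"
    by (rule tree_path_is_path[OF t' x y])
  have "is_path E (tree_path (E - {{L, P}}) x y) x y"
    by (rule is_path_mono[OF p]) (use p in \<open>auto simp: is_path_def\<close>)
  then show ?thesis using tree_path_eq[OF t] by metis
qed

lemma tree_path_remove_leaf:
  assumes t: "is_tree Vs E" and L: "L \<in> Vs" and nL: "nbrs E L = {P}"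
    and x: "x \<in> Vs - {L}"
  shows "tree_path E x L = tree_path (E - {{L, P}}) x P @ [L]"
proof -
  have t': "is_tree (Vs - {L}) (E - {{L, P}})" by (rule tree_remove_leaf[OF t L nL])
  have LP: "{L, P} \<in> E" using nL by (auto simp: nbrs_def)
  have P: "P \<in> Vs - {L}" using wf_edgeD[OF tree_wf[OF t] LP] by auto
  have p: "is_path (E - {{L, P}}) (tree_path (E - {{L, P}}) x P) x P"
    by (rule tree_path_is_path[OF t' x P])
  have p2: "is_path E (tree_path (E - {{L, P}}) x P) x P"
    by (rule is_path_mono[OF p]) (use p in \<open>auto simp: is_path_def\<close>)
  have "set (tree_path (E - {{L, P}}) x P) \<subseteq> Vs - {L}"
    by (rule is_path_in_Vs[OF tree_wf[OF t'] p x])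
  then have "L \<notin> set (tree_path (E - {{L, P}}) x P)" by auto
  then have "is_path E (tree_path (E - {{L, P}}) x P @ [L]) x L"
    using is_path_snoc[OF p2, of L] LP by (simp add: insert_commute)
  then show ?thesis using tree_path_eq[OF t] by metis
qed

lemma tree_path_length_ge2:
  assumes t: "is_tree Vs E" and a: "a \<in> Vs" and x: "x \<in> Vs" "x \<noteq> a"
  shows "2 \<le> length (tree_path E a x)"
proof (rule ccontr)
  have p: "tree_path E a x \<noteq> []" "hd (tree_path E a x) = a" "last (tree_path E a x) = x"
    using tree_path_is_path[OF t a x(1)] by (auto simp: is_path_def)
  assume "\<not> 2 \<le> length (tree_path E a x)"
  then have "length (tree_path E a x) = 1" using p(1) by (cases "tree_path E a x") (auto simp: Suc_le_eq)
  then have "hd (tree_path E a x) = last (tree_path E a x)" by (cases "tree_path E a x") auto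
  then show False using p x(2) by simp
qed

lemma tree_path_nbr:
  assumes t: "is_tree Vs E" and a: "a \<in> Vs" and xy: "{x, y} \<in> E"
  shows "tree_path E a y = tree_path E a x @ [y] \<or> tree_path E a x = tree_path E a y @ [x]"
proof -
  have wf: "wf_edges Vs E" by (rule tree_wf[OF t])
  have xV: "x \<in> Vs" "y \<in> Vs" "x \<noteq> y" using wf_edgeD[OF wf xy] by auto
  define ps where "ps = tree_path E a x"
  have ps: "is_path E ps a x" unfolding ps_def by (rule tree_path_is_path[OF t a xV(1)])
  show ?thesis
  proof (cases "y \<in> set ps")
    case False
    have "is_path E (ps @ [y]) a y" by (rule is_path_snoc[OF ps xy False])
    then show ?thesis using tree_path_eq[OF t] ps_def by metis
  next
    case True
    then obtain i where i: "i < length ps" "ps ! i = y" by (auto simp: in_set_conv_nth)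
    have p1: "is_path E (take (Suc i) ps) a y" using is_path_take[OF ps i(1)] i(2) by simp
    have "x \<notin> set (take (Suc i) ps)"
    proof
      assume "x \<in> set (take (Suc i) ps)"
      then obtain j where j: "j < Suc i" "ps ! j = x" using i(1) by (auto simp: in_set_conv_nth)
      have "ps ! (length ps - 1) = x" using ps by (auto simp: is_path_def last_conv_nth)
      moreover have d: "distinct ps" using ps by (simp add: is_path_def)
      ultimately have "j = length ps - 1" using j i(1) nth_eq_iff_index_eq[OF d] by auto
      then have "j = i" using j i(1) by auto
      then show False using j i xV(3) by simp
    qed
    then have "is_path E (take (Suc i) ps @ [x]) a x"
      using is_path_snoc[OF p1, of x] xy by (simp add: insert_commute)
    then have "tree_path E a x = tree_path E a y @ [x]"
      using tree_path_eq[OF t] p1 by metis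
    then show ?thesis by simp
  qed
qed

section \<open>The entries of the matrix of ev\<close>

lemma comp2_simps [simp]: "comp2 0 v = fst v" "comp2 (Suc 0) v = snd v"
  by (auto simp: comp2_def)

definition path_coord :: "('v \<Rightarrow> 'v \<Rightarrow> int \<times> int) \<Rightarrow> 'v list \<Rightarrow> 'v set \<Rightarrow> nat \<Rightarrow> int" where
  "path_coord dir ps e c = (\<Sum>t<length ps - 1.
      if {ps ! t, ps ! Suc t} = e then comp2 c (dir (ps ! t) (ps ! Suc t)) else 0)"

lemma path_coord_snoc:
  assumes "ps \<noteq> []"
  shows "path_coord dir (ps @ [z]) e c = path_coord dir ps e c +
    (if {last ps, z} = e then comp2 c (dir (last ps) z) else 0)"
proof -
  have len: "length (ps @ [z]) - 1 = Suc (length ps - 1)" using assms by simp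
  have "path_coord dir (ps @ [z]) e c = (\<Sum>t<length ps - 1.
      if {(ps @ [z]) ! t, (ps @ [z]) ! Suc t} = e
      then comp2 c (dir ((ps @ [z]) ! t) ((ps @ [z]) ! Suc t)) else 0)
      + (if {(ps @ [z]) ! (length ps - 1), (ps @ [z]) ! Suc (length ps - 1)} = e
         then comp2 c (dir ((ps @ [z]) ! (length ps - 1)) ((ps @ [z]) ! Suc (length ps - 1)))
         else 0)"
    unfolding path_coord_def len by simp
  also have "(\<Sum>t<length ps - 1. if {(ps @ [z]) ! t, (ps @ [z]) ! Suc t} = e
      then comp2 c (dir ((ps @ [z]) ! t) ((ps @ [z]) ! Suc t)) else 0) = path_coord dir ps e c"
    unfolding path_coord_def by (intro sum.cong) (auto simp: nth_append)
  also have "(ps @ [z]) ! (length ps - 1) = last ps"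
    using assms by (simp add: nth_append last_conv_nth)
  also have "(ps @ [z]) ! Suc (length ps - 1) = z" using assms by (simp add: nth_append)
  finally show ?thesis .
qed

lemma path_coord_not_edge:
  assumes "is_path E ps a b" "e \<notin> E"
  shows "path_coord dir ps e c = 0"
  using assms unfolding path_coord_def is_path_def by (intro sum.neutral) auto

text \<open>The entry of the matrix of ev in the coordinates (h(V0), edge lengths): the row (x, c) is
  the c-th coordinate of the marked end at x; the column Inl j is the j-th coordinate of h(V0),
  the column Inr e the length of the bounded edge e.\<close>
definition ev_entry :: "'v set set \<Rightarrow> ('v \<Rightarrow> 'v \<Rightarrow> int \<times> int) \<Rightarrow> 'v \<Rightarrow> 'v \<times> nat \<Rightarrow>
    nat + 'v set \<Rightarrow> real" where
  "ev_entry E dir V0 r cl = (case cl of Inl j \<Rightarrow> if j = snd r then 1 else 0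
     | Inr e \<Rightarrow> of_int (path_coord dir (tree_path E V0 (fst r)) e (snd r)))"

lemma ev_entry_Inl [simp]: "ev_entry E dir V0 r (Inl j) = (if j = snd r then 1 else 0)"
  by (simp add: ev_entry_def)

lemma ev_entry_Inr [simp]:
  "ev_entry E dir V0 r (Inr e) = of_int (path_coord dir (tree_path E V0 (fst r)) e (snd r))"
  by (simp add: ev_entry_def)

lemma ev_entry_not_edge:
  assumes "is_tree Vs E" "V0 \<in> Vs" "x \<in> Vs" "e \<notin> E"
  shows "ev_entry E dir V0 (x, c) (Inr e) = 0"
  using path_coord_not_edge[OF tree_path_is_path[OF assms(1-3)] assms(4)] by simp

lemma ev_entry_remove_leaf:
  assumes t: "is_tree Vs E" and L: "L \<in> Vs" "nbrs E L = {P}"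
    and rv: "rv \<in> Vs - {L}" and x: "x \<in> Vs - {L}"
  shows "ev_entry (E - {{L, P}}) dir rv (x, c) cl = ev_entry E dir rv (x, c) cl"
  using tree_path_remove[OF t L rv x] by (cases cl) simp_all

lemma ev_entry_leaf:
  assumes t: "is_tree Vs E" and L: "L \<in> Vs" "nbrs E L = {P}" and rv: "rv \<in> Vs - {L}"
  shows "ev_entry E dir rv (L, c) cl = ev_entry (E - {{L, P}}) dir rv (P, c) cl
    + (if cl = Inr {P, L} then of_int (comp2 c (dir P L)) else 0)"
proof (cases cl)
  case (Inr e)
  have "{L, P} \<in> E" using L by (auto simp: nbrs_def)
  then have P: "P \<in> Vs - {L}" using wf_edgeD[OF tree_wf[OF t]] by auto
  have "is_path (E - {{L, P}}) (tree_path (E - {{L, P}}) rv P) rv P"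
    by (rule tree_path_is_path[OF tree_remove_leaf[OF t L] rv P])
  then have "tree_path (E - {{L, P}}) rv P \<noteq> []" "last (tree_path (E - {{L, P}}) rv P) = P"
    by (auto simp: is_path_def)
  then show ?thesis
    using Inr tree_path_remove_leaf[OF t L rv]
      path_coord_snoc[of "tree_path (E - {{L, P}}) rv P" dir L e c] by simp
qed simp

section \<open>String-free marked trees\<close>

text \<open>The combinatorial structure left over from a string-free curve after forgetting its ends:
  a tree with a set M of marked vertices (those carrying marked ends), where every unmarked
  vertex has two or three bounded edges (two exactly when it carries a non-contracted end),
  trivalent unmarked vertices are balanced, and no path through unmarked vertices joins two
  distinct bivalent unmarked vertices (such a path would extend to a string).\<close>
definition string_free_tree :: "'v set \<Rightarrow> 'v set set \<Rightarrow> ('v \<Rightarrow> 'v \<Rightarrow> int \<times> int) \<Rightarrow> 'v set \<Rightarrow> bool"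
  where
  "string_free_tree Vs E dir M \<longleftrightarrow> is_tree Vs E \<and> M \<subseteq> Vs \<and>
    (\<forall>u w. {u, w} \<in> E \<longrightarrow> dir w u = - dir u w) \<and>
    (\<forall>u\<in>Vs - M. card (nbrs E u) = 2 \<or> card (nbrs E u) = 3) \<and>
    (\<forall>u\<in>Vs - M. card (nbrs E u) = 3 \<longrightarrow> (\<Sum>w\<in>nbrs E u. dir u w) = 0) \<and>
    (\<forall>a b ps. a \<in> Vs - M \<and> b \<in> Vs - M \<and> a \<noteq> b \<and> card (nbrs E a) = 2 \<and> card (nbrs E b) = 2 \<and>
        is_path E ps a b \<longrightarrow> \<not> set ps \<subseteq> Vs - M)"

context
  fixes Vs :: "'v set" and E :: "'v set set" and dir :: "'v \<Rightarrow> 'v \<Rightarrow> int \<times> int" and M :: "'v set"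
  assumes sft: "string_free_tree Vs E dir M"
begin

lemma sft_tree: "is_tree Vs E"
  using sft by (simp add: string_free_tree_def)

lemma sft_marked: "M \<subseteq> Vs"
  using sft by (simp add: string_free_tree_def)

lemma sft_antisym: "{u, w} \<in> E \<Longrightarrow> dir w u = - dir u w"
  using sft by (simp add: string_free_tree_def)

lemma sft_degree: "u \<in> Vs - M \<Longrightarrow> card (nbrs E u) = 2 \<or> card (nbrs E u) = 3"
  using sft by (simp add: string_free_tree_def)

lemma sft_balanced: "u \<in> Vs - M \<Longrightarrow> card (nbrs E u) = 3 \<Longrightarrow> (\<Sum>w\<in>nbrs E u. dir u w) = 0"
  using sft by (simp add: string_free_tree_def)

lemma sft_no_string:
  assumes "a \<in> Vs - M" "b \<in> Vs - M" "a \<noteq> b" "card (nbrs E a) = 2" "card (nbrs E b) = 2"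
    and "is_path E ps a b" "set ps \<subseteq> Vs - M"
  shows False
  using sft assms unfolding string_free_tree_def by blast

lemma sft_finite: "finite Vs" "finite M" "finite E"
  using sft_tree sft_marked tree_finite_E[OF sft_tree] finite_subset[OF sft_marked]
  by (auto simp: is_tree_def)

lemma sft_subtree:
  assumes t': "is_tree Vs' E'" and EE: "E' \<subseteq> E" and M': "M' \<subseteq> Vs'" and U: "Vs' - M' \<subseteq> Vs - M"
    and nb: "\<And>w. w \<in> Vs' - M' \<Longrightarrow> nbrs E' w = nbrs E w"
  shows "string_free_tree Vs' E' dir M'"
  unfolding string_free_tree_def
proof (intro conjI allI impI ballI)
  show "dir w u = - dir u w" if "{u, w} \<in> E'" for u w using sft_antisym that EE by auto
  show "card (nbrs E' u) = 2 \<or> card (nbrs E' u) = 3" if "u \<in> Vs' - M'" for u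
    using sft_degree that U nb[OF that] by auto
  show "(\<Sum>w\<in>nbrs E' u. dir u w) = 0" if "u \<in> Vs' - M'" "card (nbrs E' u) = 3" for u
    using sft_balanced that U nb[OF that(1)] by auto
  fix a b ps
  assume h: "a \<in> Vs' - M' \<and> b \<in> Vs' - M' \<and> a \<noteq> b \<and> card (nbrs E' a) = 2 \<and>
    card (nbrs E' b) = 2 \<and> is_path E' ps a b"
  have "is_path E ps a b"
    using h is_path_mono[of E' ps a b E] EE by (auto simp: is_path_def)
  moreover have "a \<in> Vs - M" "b \<in> Vs - M" using h U by auto
  moreover have "card (nbrs E a) = 2" "card (nbrs E b) = 2" using h nb by auto
  ultimately show "\<not> set ps \<subseteq> Vs' - M'"
    using sft_no_string[of a b ps] h U by blast
qed (use t' M' in auto)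

end

subsection \<open>Removable configurations\<close>

text \<open>The three configurations that can be cut off a string-free marked tree without touching the
  root V0: a marked leaf L on a marked vertex P; a marked leaf L on a bivalent unmarked vertex u
  whose other neighbour is Q; and a cherry of two marked leaves L1, L2 on an unmarked vertex u.\<close>

definition marked_leaf_pair :: "'v set set \<Rightarrow> 'v set \<Rightarrow> 'v \<Rightarrow> 'v \<Rightarrow> 'v \<Rightarrow> bool" where
  "marked_leaf_pair E M V0 L P \<longleftrightarrow> L \<in> M \<and> P \<in> M \<and> nbrs E L = {P} \<and> L \<noteq> V0"

definition end_leaf :: "'v set \<Rightarrow> 'v set set \<Rightarrow> 'v set \<Rightarrow> 'v \<Rightarrow> 'v \<Rightarrow> 'v \<Rightarrow> 'v \<Rightarrow> bool" where
  "end_leaf Vs E M V0 u L Q \<longleftrightarrow> u \<in> Vs - M \<and> nbrs E u = {L, Q} \<and> L \<noteq> Q \<and> L \<in> M \<and>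
     nbrs E L = {u} \<and> L \<noteq> V0 \<and> u \<noteq> V0"

definition cherry :: "'v set \<Rightarrow> 'v set set \<Rightarrow> 'v set \<Rightarrow> 'v \<Rightarrow> 'v \<Rightarrow> 'v \<Rightarrow> 'v \<Rightarrow> bool" where
  "cherry Vs E M V0 u L1 L2 \<longleftrightarrow> u \<in> Vs - M \<and> L1 \<noteq> L2 \<and> L1 \<in> M \<and> L2 \<in> M \<and>
     nbrs E L1 = {u} \<and> nbrs E L2 = {u} \<and> L1 \<noteq> V0 \<and> L2 \<noteq> V0"

lemma deepest_vertex:
  assumes g: "string_free_tree Vs E dir M" and V0: "V0 \<in> Vs" and x: "x \<in> Vs" "x \<noteq> V0"
    and deepest: "\<And>y. y \<in> Vs \<Longrightarrow> length (tree_path E V0 y) \<le> length (tree_path E V0 x)"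
  shows "x \<in> M \<and> (\<exists>P. nbrs E x = {P} \<and> tree_path E V0 x = tree_path E V0 P @ [x])"
proof -
  let ?tp = "tree_path E V0"
  have t: "is_tree Vs E" by (rule sft_tree[OF g])
  have nbV: "y \<in> Vs" if "y \<in> nbrs E x" for y
    using that wf_edgeD[OF tree_wf[OF t]] by (auto simp: nbrs_def)
  have parent: "?tp x = ?tp y @ [x]" if y: "y \<in> nbrs E x" for y
  proof -
    have "?tp y \<noteq> ?tp x @ [y]" using deepest[OF nbV[OF y]] by auto
    then show ?thesis using tree_path_nbr[OF t V0, of x y] y by (simp add: nbrs_def)
  qed
  have unique: "y = last (butlast (?tp x))" if y: "y \<in> nbrs E x" for y
    using parent[OF y] tree_path_is_path[OF t V0 nbV[OF y]] by (simp add: is_path_def)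
  obtain P where P: "P \<in> nbrs E x"
    using tree_nbr_exists[OF t x(1) V0] x(2) by auto
  have nx: "nbrs E x = {P}" using unique P by blast
  have "x \<in> M" using sft_degree[OF g, of x] x nx by auto
  then show ?thesis using nx parent[OF P] by auto
qed

text \<open>The children of the parent P of a deepest vertex L (its neighbours further from the root)
  are deepest as well, hence marked leaves hanging at P; apart from them P has at most one
  neighbour, its own parent, and none if P is the root.\<close>
lemma children_of_deepest_parent:
  assumes g: "string_free_tree Vs E dir M" and V0: "V0 \<in> Vs" and L: "L \<in> Vs" "L \<noteq> V0"
    and deepest: "\<forall>y\<in>Vs. length (tree_path E V0 y) \<le> length (tree_path E V0 L)"
    and P: "nbrs E L = {P}" "tree_path E V0 L = tree_path E V0 P @ [L]"
    and ch_def: "ch = {y \<in> nbrs E P. tree_path E V0 y = tree_path E V0 P @ [y]}"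
  shows "y \<in> ch \<Longrightarrow> y \<in> M \<and> y \<noteq> V0 \<and> nbrs E y = {P}"
    and "L \<in> ch" and "card (nbrs E P) \<le> card ch + 1" and "P = V0 \<Longrightarrow> nbrs E P \<subseteq> ch"
proof -
  let ?tp = "tree_path E V0"
  have t: "is_tree Vs E" by (rule sft_tree[OF g])
  have nbV: "y \<in> Vs" if "y \<in> nbrs E x" for x y
    using that wf_edgeD[OF tree_wf[OF t]] by (auto simp: nbrs_def)
  have tp_last: "x \<in> Vs \<Longrightarrow> last (?tp x) = x" for x
    using tree_path_is_path[OF t V0] by (simp add: is_path_def)
  have PV: "P \<in> Vs" using nbV P(1) by auto
  show "y \<in> M \<and> y \<noteq> V0 \<and> nbrs E y = {P}" if y: "y \<in> ch" for y
  proof -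
    have yV: "y \<in> Vs" and yt: "?tp y = ?tp P @ [y]" using y nbV unfolding ch_def by auto
    have "y \<noteq> V0"
      using yt is_path_same[OF tree_path_is_path[OF t V0 V0]] tree_path_is_path[OF t V0 PV]
      by (auto simp: is_path_def)
    moreover have "length (?tp z) \<le> length (?tp y)" if "z \<in> Vs" for z
      using yt P(2) deepest that by simp
    ultimately obtain P' where d: "y \<in> M" "nbrs E y = {P'}" "?tp y = ?tp P' @ [y]"
      using deepest_vertex[OF g V0 yV] by blast
    have "?tp P' = ?tp P" using d(3) yt by simp
    then have "P' = P" using tp_last[OF PV] tp_last[OF nbV[of P' y]] d(2) by auto
    then show ?thesis using d \<open>y \<noteq> V0\<close> by simp
  qed
  show "L \<in> ch" unfolding ch_def using P by (auto simp: nbrs_def insert_commute)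
  have parent: "y = last (butlast (?tp P))" and parent_V0: "P \<noteq> V0"
    if "y \<in> nbrs E P - ch" for y
  proof -
    have yV: "y \<in> Vs" using that nbV by blast
    have tpP: "?tp P = ?tp y @ [P]"
      using that tree_path_nbr[OF t V0, of P y] unfolding ch_def by (auto simp: nbrs_def)
    then show "y = last (butlast (?tp P))" using tp_last[OF yV] by simp
    show "P \<noteq> V0"
    proof
      assume "P = V0"
      then have "?tp y = []" using tpP is_path_same[OF tree_path_is_path[OF t V0 V0]] by simp
      then show False using tree_path_is_path[OF t V0 yV] by (simp add: is_path_def)
    qed
  qed
  have sub: "nbrs E P - ch \<subseteq> {last (butlast (?tp P))}" using parent by blast
  have "card (nbrs E P - ch) \<le> 1" using card_mono[OF _ sub] by simp
  moreover have "nbrs E P = ch \<union> (nbrs E P - ch)" unfolding ch_def by auto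
  ultimately show "card (nbrs E P) \<le> card ch + 1" using card_Un_le[of ch "nbrs E P - ch"] by simp
  show "nbrs E P \<subseteq> ch" if "P = V0" using parent_V0 that by blast
qed

text \<open>Every string-free marked tree with at least two vertices contains a removable
  configuration: a deepest vertex L is a marked leaf; if its neighbour P is unmarked, P either
  has a second marked leaf as child (a cherry) or is bivalent (an end-leaf configuration, or a
  cherry if P is the root).\<close>
lemma removable_configuration_exists:
  assumes g: "string_free_tree Vs E dir M" and V0: "V0 \<in> Vs" and two: "2 \<le> card Vs"
  shows "(\<exists>L P. marked_leaf_pair E M V0 L P) \<or> (\<exists>u L Q. end_leaf Vs E M V0 u L Q) \<or>
    (\<exists>u L1 L2. cherry Vs E M V0 u L1 L2)"
proof -
  let ?tp = "tree_path E V0"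
  have t: "is_tree Vs E" and fin: "finite Vs" using sft_tree[OF g] sft_finite[OF g] by auto
  define K where "K = Max (length ` ?tp ` Vs)"
  have "K \<in> length ` ?tp ` Vs" unfolding K_def using fin V0 by (intro Max_in) auto
  then obtain L where L: "L \<in> Vs" "length (?tp L) = K" by auto
  have deepest: "length (?tp y) \<le> length (?tp L)" if "y \<in> Vs" for y
    unfolding L(2) K_def using fin that by auto
  have LV0: "L \<noteq> V0"
  proof
    assume "L = V0"
    have "\<not> Vs \<subseteq> {V0}" using two card_mono[of "{V0}" Vs] by auto
    then obtain v where v: "v \<in> Vs" "v \<noteq> V0" by auto
    have "?tp V0 = [V0]" by (rule is_path_same[OF tree_path_is_path[OF t V0 V0]])
    then show False using tree_path_length_ge2[OF t V0 v] deepest[OF v(1)] \<open>L = V0\<close> by simp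
  qed
  obtain P where LM: "L \<in> M" and nL: "nbrs E L = {P}" and tpL: "?tp L = ?tp P @ [L]"
    using deepest_vertex[OF g V0 L(1) LV0 deepest] by blast
  define ch where "ch = {y \<in> nbrs E P. ?tp y = ?tp P @ [y]}"
  have "\<forall>y\<in>Vs. length (?tp y) \<le> length (?tp L)" using deepest by blast
  note children = children_of_deepest_parent[OF g V0 L(1) LV0 this nL tpL ch_def]
  show ?thesis
  proof (cases "P \<in> M")
    case True
    then have "marked_leaf_pair E M V0 L P" using LM nL LV0 by (simp add: marked_leaf_pair_def)
    then show ?thesis by blast
  next
    case False
    have PU: "P \<in> Vs - M"
      using False nL wf_edgeD[OF tree_wf[OF t]] by (auto simp: nbrs_def)
    from sft_degree[OF g PU] show ?thesis
    proof
      assume "card (nbrs E P) = 3"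
      then have "2 \<le> card ch" using children(3) by simp
      moreover have "finite ch" using nbrs_finite[OF tree_wf[OF t] fin] unfolding ch_def by simp
      ultimately have "\<not> ch \<subseteq> {L}" using card_mono[of "{L}" ch] by auto
      then obtain y where y: "y \<in> ch" "y \<noteq> L" by auto
      then have "cherry Vs E M V0 P L y"
        using children(1)[OF y(1)] children(1)[OF children(2)] PU by (simp add: cherry_def)
      then show ?thesis by blast
    next
      assume "card (nbrs E P) = 2"
      moreover have "L \<in> nbrs E P" using nL by (auto simp: nbrs_def insert_commute)
      moreover obtain a b where "nbrs E P = {a, b}" "a \<noteq> b"
        using \<open>card (nbrs E P) = 2\<close> by (meson card_2_iff)
      ultimately obtain Q where Q: "nbrs E P = {L, Q}" "L \<noteq> Q" by auto
      show ?thesis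
      proof (cases "P = V0")
        case False
        then have "end_leaf Vs E M V0 P L Q" using PU Q LM nL LV0 by (simp add: end_leaf_def)
        then show ?thesis by blast
      next
        case True
        then have "Q \<in> ch" using children(4) Q by auto
        then have "cherry Vs E M V0 P L Q"
          using children(1)[OF \<open>Q \<in> ch\<close>] children(1)[OF children(2)] PU Q(2) by (simp add: cherry_def)
        then show ?thesis by blast
      qed
    qed
  qed
qed

subsection \<open>Removing a configuration\<close>

lemma reduce_marked_leaf_pair:
  assumes g: "string_free_tree Vs E dir M" and c: "marked_leaf_pair E M V0 L P"
  shows "string_free_tree (Vs - {L}) (E - {{L, P}}) dir (M - {L})"
proof -
  have L: "L \<in> M" "nbrs E L = {P}" and P: "P \<in> M" using c by (auto simp: marked_leaf_pair_def)
  have t: "is_tree Vs E" and MV: "M \<subseteq> Vs" using sft_tree[OF g] sft_marked[OF g] .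
  show ?thesis
  proof (rule sft_subtree[OF g])
    show "is_tree (Vs - {L}) (E - {{L, P}})" by (rule tree_remove_leaf[OF t _ L(2)]) (use L MV in auto)
    show "nbrs (E - {{L, P}}) w = nbrs E w" if "w \<in> Vs - {L} - (M - {L})" for w
      using that P by (auto simp: nbrs_def doubleton_eq_iff)
  qed (use MV in auto)
qed

text \<open>In an end-leaf configuration an unmarked Q is trivalent: a bivalent Q would form, together
  with u, a string.\<close>
lemma end_leaf_other_trivalent:
  assumes g: "string_free_tree Vs E dir M" and c: "end_leaf Vs E M V0 u L Q" and QM: "Q \<notin> M"
  shows "card (nbrs E Q) = 3"
proof -
  have u: "u \<in> Vs - M" and nu: "nbrs E u = {L, Q}" "L \<noteq> Q" using c by (auto simp: end_leaf_def)
  have uQ: "{u, Q} \<in> E" using nu by (auto simp: nbrs_def)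
  have QV: "Q \<in> Vs" "Q \<noteq> u" using wf_edgeD[OF tree_wf[OF sft_tree[OF g]] uQ] by auto
  have "card (nbrs E Q) \<noteq> 2"
  proof
    assume "card (nbrs E Q) = 2"
    moreover have "is_path E [u, Q] u Q" using uQ QV by (auto simp: is_path_def less_Suc_eq)
    ultimately show False
      using sft_no_string[OF g, of u Q "[u, Q]"] u QM QV nu by simp
  qed
  then show ?thesis using sft_degree[OF g, of Q] QM QV by auto
qed

text \<open>After removing an end-leaf configuration, Q becomes bivalent; a string-like path ending
  at Q would extend through u to a string-like path in the original tree.\<close>
lemma end_leaf_no_string:
  assumes g: "string_free_tree Vs E dir M" and c: "end_leaf Vs E M V0 u L Q"
    and ab: "a \<in> Vs - M - {u}" "b \<in> Vs - M - {u}" "a \<noteq> b"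
    and deg: "card (nbrs E a) = 2 \<or> a = Q" "card (nbrs E b) = 2 \<or> b = Q"
    and p: "is_path E ps a b" and S: "set ps \<subseteq> Vs - M - {u}"
  shows False
proof -
  have u: "u \<in> Vs - M" and nu: "nbrs E u = {L, Q}" "L \<noteq> Q" using c by (auto simp: end_leaf_def)
  have uQ: "{u, Q} \<in> E" using nu by (auto simp: nbrs_def)
  have through_u: False
    if "x \<in> Vs - M - {u}" "card (nbrs E x) = 2" "is_path E qs Q x" "set qs \<subseteq> Vs - M - {u}"
    for x qs
  proof -
    have "is_path E (u # qs) u x" using is_path_cons[OF that(3) _] uQ that(4) by auto
    moreover have "set (u # qs) \<subseteq> Vs - M" using that(4) u by auto
    ultimately show False
      using sft_no_string[OF g u, of x "u # qs"] that(1,2) nu by auto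
  qed
  consider "a = Q" | "b = Q" | "a \<noteq> Q" "b \<noteq> Q" by blast
  then show False
  proof cases
    case 1
    then show False using through_u[of b ps] ab deg p S by auto
  next
    case 2
    then show False using through_u[of a "rev ps"] ab deg is_path_rev[OF p] S by auto
  next
    case 3
    then show False using sft_no_string[OF g, of a b ps] ab deg p S by auto
  qed
qed

lemma reduce_end_leaf:
  assumes g: "string_free_tree Vs E dir M" and c: "end_leaf Vs E M V0 u L Q"
  shows "is_tree (Vs - {L}) (E - {{L, u}})" "nbrs (E - {{L, u}}) u = {Q}"
    and "string_free_tree (Vs - {L} - {u}) (E - {{L, u}} - {{u, Q}}) dir (M - {L})"
proof -
  let ?E = "E - {{L, u}} - {{u, Q}}"
  have u: "u \<in> Vs - M" and nu: "nbrs E u = {L, Q}" "L \<noteq> Q" and L: "L \<in> M" "nbrs E L = {u}"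
    using c by (auto simp: end_leaf_def)
  have t: "is_tree Vs E" and MV: "M \<subseteq> Vs" using sft_tree[OF g] sft_marked[OF g] .
  have uQ: "{u, Q} \<in> E" using nu by (auto simp: nbrs_def)
  have QV: "Q \<in> Vs" "Q \<noteq> u" "Q \<noteq> L" using wf_edgeD[OF tree_wf[OF t] uQ] nu by auto
  show t1: "is_tree (Vs - {L}) (E - {{L, u}})"
    by (rule tree_remove_leaf[OF t _ L(2)]) (use L MV in auto)
  show n1: "nbrs (E - {{L, u}}) u = {Q}"
    using nu u L by (auto simp: nbrs_def doubleton_eq_iff)
  have nb_other: "nbrs ?E w = nbrs E w" if "w \<noteq> L" "w \<noteq> u" "w \<noteq> Q" for w
    using that by (auto simp: nbrs_def doubleton_eq_iff)
  have nb_Q: "nbrs ?E Q = nbrs E Q - {u}"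
    using QV by (auto simp: nbrs_def doubleton_eq_iff)
  have deg_Q: "card (nbrs ?E Q) = 2" if "Q \<notin> M"
  proof -
    have "u \<in> nbrs E Q" using uQ by (auto simp: nbrs_def insert_commute)
    then show ?thesis using end_leaf_other_trivalent[OF g c that] nb_Q
      nbrs_finite[OF tree_wf[OF t] sft_finite(1)[OF g]] by (simp add: card_Diff_singleton)
  qed
  show "string_free_tree (Vs - {L} - {u}) ?E dir (M - {L})"
    unfolding string_free_tree_def
  proof (intro conjI allI impI ballI)
    show "is_tree (Vs - {L} - {u}) ?E" by (rule tree_remove_leaf[OF t1 _ n1]) (use u L in auto)
    show "M - {L} \<subseteq> Vs - {L} - {u}" using MV u by auto
    show "dir w x = - dir x w" if "{x, w} \<in> ?E" for x w using sft_antisym[OF g] that by auto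
    fix x assume x: "x \<in> Vs - {L} - {u} - (M - {L})"
    then show "card (nbrs ?E x) = 2 \<or> card (nbrs ?E x) = 3"
      using deg_Q nb_other[of x] sft_degree[OF g, of x] L by (cases "x = Q") auto
    show "(\<Sum>w\<in>nbrs ?E x. dir x w) = 0" if "card (nbrs ?E x) = 3"
      using that x deg_Q nb_other[of x] sft_balanced[OF g, of x] L by (cases "x = Q") auto
  next
    fix a b ps
    assume h: "a \<in> Vs - {L} - {u} - (M - {L}) \<and> b \<in> Vs - {L} - {u} - (M - {L}) \<and> a \<noteq> b \<and>
      card (nbrs ?E a) = 2 \<and> card (nbrs ?E b) = 2 \<and> is_path ?E ps a b"
    have p: "is_path E ps a b" using h is_path_mono[of ?E ps a b E] by (auto simp: is_path_def)
    have deg: "card (nbrs E x) = 2 \<or> x = Q" if "x \<in> {a, b}" for x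
      using that h nb_other[of x] by auto
    show "\<not> set ps \<subseteq> Vs - {L} - {u} - (M - {L})"
      using end_leaf_no_string[OF g c, of a b ps] h deg p L by auto
  qed
qed

lemma reduce_cherry:
  assumes g: "string_free_tree Vs E dir M" and c: "cherry Vs E M V0 u L1 L2"
  shows "is_tree (Vs - {L1}) (E - {{L1, u}})" "nbrs (E - {{L1, u}}) L2 = {u}"
    and "string_free_tree (Vs - {L1} - {L2}) (E - {{L1, u}} - {{L2, u}}) dir
      (insert u (M - {L1} - {L2}))"
proof -
  have u: "u \<in> Vs - M" and L: "L1 \<noteq> L2" "L1 \<in> M" "L2 \<in> M"
    and n: "nbrs E L1 = {u}" "nbrs E L2 = {u}" using c by (auto simp: cherry_def)
  have t: "is_tree Vs E" and MV: "M \<subseteq> Vs" using sft_tree[OF g] sft_marked[OF g] .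
  show t1: "is_tree (Vs - {L1}) (E - {{L1, u}})"
    by (rule tree_remove_leaf[OF t _ n(1)]) (use L MV in auto)
  show n2: "nbrs (E - {{L1, u}}) L2 = {u}" using n u L by (auto simp: nbrs_def doubleton_eq_iff)
  show "string_free_tree (Vs - {L1} - {L2}) (E - {{L1, u}} - {{L2, u}}) dir
      (insert u (M - {L1} - {L2}))"
  proof (rule sft_subtree[OF g])
    show "is_tree (Vs - {L1} - {L2}) (E - {{L1, u}} - {{L2, u}})"
      by (rule tree_remove_leaf[OF t1 _ n2]) (use L MV in auto)
    show "nbrs (E - {{L1, u}} - {{L2, u}}) w = nbrs E w"
      if "w \<in> Vs - {L1} - {L2} - insert u (M - {L1} - {L2})" for w
      using that by (auto simp: nbrs_def doubleton_eq_iff)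
  qed (use MV u L in auto)
qed

subsection \<open>Induction on string-free marked trees\<close>

lemma sft_single:
  assumes g: "string_free_tree Vs E dir M" and V0: "V0 \<in> Vs" and small: "\<not> 2 \<le> card Vs"
  shows "Vs = {V0}" "E = {}" "M = {V0}"
proof -
  have t: "is_tree Vs E" by (rule sft_tree[OF g])
  have "0 < card Vs" using V0 sft_finite(1)[OF g] card_gt_0_iff by blast
  then have "card Vs = 1" using small by linarith
  then show Vs: "Vs = {V0}" using V0 by (auto simp: card_1_singleton_iff)
  show E: "E = {}" using t \<open>card Vs = 1\<close> tree_finite_E[OF t] by (simp add: is_tree_def)
  have "V0 \<in> M" using sft_degree[OF g, of V0] V0 E by (auto simp: nbrs_def)
  then show "M = {V0}" using sft_marked[OF g] Vs by auto
qed

lemma string_free_tree_induct [consumes 2, case_names single leaf_pair end_leaf cherry]: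
  assumes "string_free_tree Vs E dir M" and "V0 \<in> Vs"
    and single: "P {V0} {} {V0}"
    and leaf_pair: "\<And>Vs E M L Q. string_free_tree Vs E dir M \<Longrightarrow> V0 \<in> Vs \<Longrightarrow>
      marked_leaf_pair E M V0 L Q \<Longrightarrow> P (Vs - {L}) (E - {{L, Q}}) (M - {L}) \<Longrightarrow> P Vs E M"
    and end_leaf: "\<And>Vs E M u L Q. string_free_tree Vs E dir M \<Longrightarrow> V0 \<in> Vs \<Longrightarrow>
      end_leaf Vs E M V0 u L Q \<Longrightarrow> P (Vs - {L} - {u}) (E - {{L, u}} - {{u, Q}}) (M - {L}) \<Longrightarrow>
      P Vs E M"
    and cherry: "\<And>Vs E M u L1 L2. string_free_tree Vs E dir M \<Longrightarrow> V0 \<in> Vs \<Longrightarrow>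
      cherry Vs E M V0 u L1 L2 \<Longrightarrow>
      P (Vs - {L1} - {L2}) (E - {{L1, u}} - {{L2, u}}) (insert u (M - {L1} - {L2})) \<Longrightarrow>
      P Vs E M"
  shows "P Vs E M"
  using assms(1,2)
proof (induction "card Vs" arbitrary: Vs E M rule: less_induct)
  case less
  note g = less.prems(1) and V0 = less.prems(2)
  have smaller: "card (Vs - X) < card Vs" if "x \<in> X" "x \<in> Vs" for X x
    using sft_finite(1)[OF g] that by (intro psubset_card_mono) auto
  show ?case
  proof (cases "2 \<le> card Vs")
    case False
    then show ?thesis using sft_single[OF g V0] single by simp
  next
    case True
    have MV: "M \<subseteq> Vs" by (rule sft_marked[OF g])
    from removable_configuration_exists[OF g V0 True] show ?thesis
    proof (elim disjE exE)
      fix L Q assume c: "marked_leaf_pair E M V0 L Q"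
      then have L: "L \<in> Vs" "L \<noteq> V0" using MV by (auto simp: marked_leaf_pair_def)
      have "P (Vs - {L}) (E - {{L, Q}}) (M - {L})"
        by (rule less.hyps[OF smaller[of L] reduce_marked_leaf_pair[OF g c]]) (use L V0 in auto)
      then show ?thesis by (rule leaf_pair[OF g V0 c])
    next
      fix u L Q assume c: "end_leaf Vs E M V0 u L Q"
      then have L: "L \<in> Vs" "L \<noteq> V0" "u \<noteq> V0" using MV by (auto simp: end_leaf_def)
      have "card (Vs - {L} - {u}) < card Vs"
        using smaller[of L "{L, u}"] L by (simp add: set_diff_eq)
      then have "P (Vs - {L} - {u}) (E - {{L, u}} - {{u, Q}}) (M - {L})"
        by (rule less.hyps[OF _ reduce_end_leaf(3)[OF g c]]) (use L V0 in auto)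
      then show ?thesis by (rule end_leaf[OF g V0 c])
    next
      fix u L1 L2 assume c: "cherry Vs E M V0 u L1 L2"
      then have L: "L1 \<in> Vs" "L1 \<noteq> V0" "L2 \<noteq> V0" using MV by (auto simp: cherry_def)
      have "card (Vs - {L1} - {L2}) < card Vs"
        using smaller[of L1 "{L1, L2}"] L by (simp add: set_diff_eq)
      then have "P (Vs - {L1} - {L2}) (E - {{L1, u}} - {{L2, u}}) (insert u (M - {L1} - {L2}))"
        by (rule less.hyps[OF _ reduce_cherry(3)[OF g c]]) (use L V0 in auto)
      then show ?thesis by (rule cherry[OF g V0 c])
    qed
  qed
qed

text \<open>A string-free marked tree has more marked than unmarked vertices.  Together with the
  edge count |E| + 2 = 2|M| this excludes a marked leaf on a marked vertex.\<close>
lemma unmarked_count_bound: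
  assumes g: "string_free_tree Vs E dir M"
  shows "card (Vs - M) + 1 \<le> card M"
proof -
  obtain V0 where "V0 \<in> Vs" using sft_tree[OF g] by (auto simp: is_tree_def)
  with g show ?thesis
  proof (induction rule: string_free_tree_induct)
    case single
    then show ?case by simp
  next
    case (leaf_pair Vs E M L Q)
    then have "L \<in> M" using leaf_pair by (simp add: marked_leaf_pair_def)
    moreover have "Vs - {L} - (M - {L}) = Vs - M" using calculation by auto
    ultimately show ?case using leaf_pair.IH sft_finite(2)[OF leaf_pair.hyps(1)]
      by (simp add: card_Diff_singleton)
  next
    case (end_leaf Vs E M u L Q)
    then have "L \<in> M" "u \<in> Vs - M" by (auto simp: end_leaf_def)
    moreover have "Vs - {L} - {u} - (M - {L}) = Vs - M - {u}" using calculation by auto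
    ultimately show ?case
      using end_leaf.IH sft_finite[OF end_leaf.hyps(1)] by (simp add: card_Diff_singleton)
  next
    case (cherry Vs E M u L1 L2)
    then have "L1 \<in> M" "L2 \<in> M" "L1 \<noteq> L2" "u \<in> Vs - M" by (auto simp: cherry_def)
    moreover have "Vs - {L1} - {L2} - insert u (M - {L1} - {L2}) = Vs - M - {u}"
      using calculation by auto
    moreover have "2 \<le> card M" "0 < card (Vs - M)"
      using calculation card_mono[OF sft_finite(2)[OF cherry.hyps(1)], of "{L1, L2}"]
        sft_finite[OF cherry.hyps(1)] by (auto simp: card_gt_0_iff)
    ultimately show ?case
      using cherry.IH sft_finite[OF cherry.hyps(1)] by (simp add: card_Diff_singleton)
  qed
qed

section \<open>The determinant of ev on a string-free marked tree\<close>

subsection \<open>Multiplicities of vertices\<close>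

lemma det2_swap: "\<bar>det2 a b\<bar> = \<bar>det2 b a\<bar>"
  unfolding det2_def by (simp add: abs_minus_commute mult.commute)

lemma det2_neg1: "\<bar>det2 (- a) b\<bar> = \<bar>det2 a b\<bar>"
  by (simp add: det2_def)

lemma det2_sum3:
  assumes "a + b + c = (0 :: int \<times> int)"
  shows "\<bar>det2 a c\<bar> = \<bar>det2 a b\<bar>" "\<bar>det2 b c\<bar> = \<bar>det2 a b\<bar>"
proof -
  have c: "c = - a - b" using assms by (simp add: algebra_simps eq_neg_iff_add_eq_0)
  show "\<bar>det2 a c\<bar> = \<bar>det2 a b\<bar>" "\<bar>det2 b c\<bar> = \<bar>det2 a b\<bar>"
    unfolding c det2_def by (simp_all add: algebra_simps abs_minus_commute)
qed

text \<open>This makes the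
  multiplicity of a vertex well defined.\<close>
lemma abs_det2_pair_independent:
  fixes f :: "'a \<Rightarrow> int \<times> int"
  assumes fin: "finite S" and card: "card S = 2 \<or> card S = 3"
    and bal: "card S = 3 \<Longrightarrow> (\<Sum>x\<in>S. f x) = 0"
    and p: "p \<in> S" "q \<in> S" "p \<noteq> q" and p': "p' \<in> S" "q' \<in> S" "p' \<noteq> q'"
  shows "\<bar>det2 (f p') (f q')\<bar> = \<bar>det2 (f p) (f q)\<bar>"
proof (cases "card S = 2")
  case True
  then obtain x y where S: "S = {x, y}" "x \<noteq> y" by (meson card_2_iff)
  show ?thesis using p p' S det2_swap[of "f x" "f y"] by auto
next
  case False
  then have "card S = 3" using card by simp
  then obtain x y z where S: "S = {x, y, z}" "x \<noteq> y" "x \<noteq> z" "y \<noteq> z" by (meson card_3_iff)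
  have "f x + f y + f z = 0" using bal \<open>card S = 3\<close> S by (simp add: algebra_simps)
  note d = det2_sum3[OF this]
  have s1: "\<bar>det2 (f y) (f x)\<bar> = \<bar>det2 (f x) (f y)\<bar>" by (rule det2_swap)
  have s2: "\<bar>det2 (f z) (f x)\<bar> = \<bar>det2 (f x) (f y)\<bar>" using d(1) det2_swap[of "f z" "f x"] by simp
  have s3: "\<bar>det2 (f z) (f y)\<bar> = \<bar>det2 (f x) (f y)\<bar>" using d(2) det2_swap[of "f z" "f y"] by simp
  have all: "\<bar>det2 (f a) (f b)\<bar> = \<bar>det2 (f x) (f y)\<bar>" if "a \<in> S" "b \<in> S" "a \<noteq> b" for a b
  proof -
    have "a = x \<or> a = y \<or> a = z" "b = x \<or> b = y \<or> b = z" using that(1,2) S(1) by auto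
    then show ?thesis using that(3) d s1 s2 s3 by (elim disjE) simp_all
  qed
  show ?thesis using all[OF p] all[OF p'] by simp
qed

definition nbr_mult :: "'v set set \<Rightarrow> ('v \<Rightarrow> 'v \<Rightarrow> int \<times> int) \<Rightarrow> 'v \<Rightarrow> int" where
  "nbr_mult E dir u = (SOME m. \<exists>w1\<in>nbrs E u. \<exists>w2\<in>nbrs E u. w1 \<noteq> w2 \<and>
     m = \<bar>det2 (dir u w1) (dir u w2)\<bar>)"

lemma nbr_mult_eq:
  assumes g: "string_free_tree Vs E dir M" and u: "u \<in> Vs - M"
    and w: "w1 \<in> nbrs E u" "w2 \<in> nbrs E u" "w1 \<noteq> w2"
  shows "nbr_mult E dir u = \<bar>det2 (dir u w1) (dir u w2)\<bar>"
proof -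
  have fin: "finite (nbrs E u)"
    using nbrs_finite[OF tree_wf[OF sft_tree[OF g]] sft_finite(1)[OF g]] .
  have ex: "\<exists>m. \<exists>w1\<in>nbrs E u. \<exists>w2\<in>nbrs E u. w1 \<noteq> w2 \<and> m = \<bar>det2 (dir u w1) (dir u w2)\<bar>"
    using w by blast
  obtain a b where ab: "a \<in> nbrs E u" "b \<in> nbrs E u" "a \<noteq> b"
    "nbr_mult E dir u = \<bar>det2 (dir u a) (dir u b)\<bar>"
    using someI_ex[OF ex] unfolding nbr_mult_def by blast
  show ?thesis
    using ab(4) abs_det2_pair_independent[OF fin sft_degree[OF g u] sft_balanced[OF g u] w ab(1-3)]
    by simp
qed

lemma nbr_mult_cong: "nbrs E' u = nbrs E u \<Longrightarrow> nbr_mult E' dir u = nbr_mult E dir u"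
  by (simp add: nbr_mult_def)

subsection \<open>Splitting off a configuration\<close>

definition ev_det :: "'v set set \<Rightarrow> ('v \<Rightarrow> 'v \<Rightarrow> int \<times> int) \<Rightarrow> 'v \<Rightarrow> 'v set \<Rightarrow> real" where
  "ev_det E dir V0 M = abs_det_on (M \<times> {0, 1}) (Inl ` {0, 1} \<union> Inr ` E) (ev_entry E dir V0)"

lemma card_ev_cols:
  fixes E :: "'a set"
  assumes "finite E"
  shows "card (Inl ` {0, 1::nat} \<union> Inr ` E :: (nat + 'a) set) = card E + 2"
  using assms by (subst card_Un_disjoint) (auto simp: card_image)

lemma card_ev_rows: "finite M \<Longrightarrow> card (M \<times> {0, 1::nat}) = 2 * card M"
  by (simp add: card_cartesian_product)

lemma end_leaf_rows:
  assumes g: "string_free_tree Vs E dir M" and V0: "V0 \<in> Vs" and conf: "end_leaf Vs E M V0 u L Q"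
  shows "x \<in> Vs - {L} - {u} \<Longrightarrow>
      ev_entry E dir V0 (x, j) cl = ev_entry (E - {{L, u}} - {{u, Q}}) dir V0 (x, j) cl"
    and "ev_entry E dir V0 (L, j) cl = ev_entry (E - {{L, u}} - {{u, Q}}) dir V0 (Q, j) cl
      + (if cl = Inr {Q, u} then of_int (comp2 j (dir Q u)) else 0)
      + (if cl = Inr {u, L} then of_int (comp2 j (dir u L)) else 0)"
proof -
  have u: "u \<in> Vs - M" and L: "L \<in> Vs" "nbrs E L = {u}" and uL: "u \<noteq> L"
    and root: "L \<noteq> V0" "u \<noteq> V0" using conf sft_marked[OF g] by (auto simp: end_leaf_def)
  have t: "is_tree Vs E" by (rule sft_tree[OF g])
  have t1: "is_tree (Vs - {L}) (E - {{L, u}})" and nu1: "nbrs (E - {{L, u}}) u = {Q}"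
    using reduce_end_leaf(1,2)[OF g conf] by auto
  show "ev_entry E dir V0 (x, j) cl = ev_entry (E - {{L, u}} - {{u, Q}}) dir V0 (x, j) cl"
    if "x \<in> Vs - {L} - {u}"
    using ev_entry_remove_leaf[OF t L, where rv = V0 and x = x]
      ev_entry_remove_leaf[OF t1 _ nu1, where rv = V0 and x = x] that u uL V0 root by auto
  show "ev_entry E dir V0 (L, j) cl = ev_entry (E - {{L, u}} - {{u, Q}}) dir V0 (Q, j) cl
      + (if cl = Inr {Q, u} then of_int (comp2 j (dir Q u)) else 0)
      + (if cl = Inr {u, L} then of_int (comp2 j (dir u L)) else 0)"
    using ev_entry_leaf[OF t L, where rv = V0 and c = j and cl = cl]
      ev_entry_leaf[OF t1 _ nu1, where rv = V0 and c = j and cl = cl] u uL V0 root by auto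
qed

text \<open>The two columns of the edges uL and uQ vanish outside
  the two rows of L, so the determinant splits into the 2x2 minor of these rows and columns,
  which is the multiplicity of u, times the determinant of the smaller tree.\<close>
lemma ev_det_end_leaf:
  assumes g: "string_free_tree Vs E dir M" and V0: "V0 \<in> Vs" and c: "end_leaf Vs E M V0 u L Q"
    and cE: "card E + 2 = 2 * card M"
  shows "ev_det E dir V0 M =
    of_int (nbr_mult E dir u) * ev_det (E - {{L, u}} - {{u, Q}}) dir V0 (M - {L})"
proof -
  define E1 E2 where "E1 = E - {{L, u}}" and "E2 = E1 - {{u, Q}}"
  define Vs2 M2 where "Vs2 = Vs - {L} - {u}" and "M2 = M - {L}"
  have u: "u \<in> Vs - M" and nu: "nbrs E u = {L, Q}" "L \<noteq> Q" and L: "L \<in> M" "nbrs E L = {u}"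
    and root: "L \<noteq> V0" "u \<noteq> V0" using c by (auto simp: end_leaf_def)
  have t: "is_tree Vs E" and MV: "M \<subseteq> Vs" and fin: "finite M" "finite E"
    using sft_tree[OF g] sft_marked[OF g] sft_finite[OF g] by auto
  have t2: "is_tree Vs2 E2"
    unfolding Vs2_def E2_def E1_def using sft_tree[OF reduce_end_leaf(3)[OF g c]] .
  have Lu: "{L, u} \<in> E" and uQ: "{u, Q} \<in> E" using L nu by (auto simp: nbrs_def)
  have QV: "Q \<in> Vs2" using wf_edgeD[OF tree_wf[OF t] uQ] nu unfolding Vs2_def by auto
  have edges: "{u, Q} \<noteq> {L, u}" "{u, Q} \<notin> E2" "{L, u} \<notin> E2" "E = E2 \<union> {{u, Q}, {L, u}}"
    using nu Lu uQ unfolding E2_def E1_def by (auto simp: doubleton_eq_iff)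
  have "card {{u, Q}, {L, u}} \<le> card E" using card_mono[OF fin(2)] Lu uQ by simp
  then have cE2: "card E2 + 2 = card E"
    using fin(2) Lu uQ edges(1) unfolding E2_def E1_def by (simp add: card_Diff_singleton)
  have cM2: "card M2 + 1 = card M" using card_Suc_Diff1[OF fin(1) L(1)] unfolding M2_def by simp
  have row_keep: "ev_entry E dir V0 (x, c) cl = ev_entry E2 dir V0 (x, c) cl" if "x \<in> M2" for x c cl
    using end_leaf_rows(1)[OF g V0 c, of x] that MV u unfolding M2_def E2_def E1_def by auto
  have row_L: "ev_entry E dir V0 (L, c) cl = ev_entry E2 dir V0 (Q, c) cl
      + (if cl = Inr {Q, u} then of_int (comp2 c (dir Q u)) else 0)
      + (if cl = Inr {u, L} then of_int (comp2 c (dir u L)) else 0)" for c cl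
    using end_leaf_rows(2)[OF g V0 c] unfolding E2_def E1_def .
  define R1 C1 where "R1 = M2 \<times> {0, 1::nat}" and "C1 = Inl ` {0, 1::nat} \<union> Inr ` E2"
  define R2 C2 where "R2 = {(L, 0::nat), (L, 1)}"
    and "C2 = ({Inr {u, Q}, Inr {L, u}} :: (nat + 'a set) set)"
  have finE2: "finite E2" and finM2: "finite M2" using fin unfolding E2_def E1_def M2_def by auto
  have card1: "card C1 = card R1" and card2: "card C2 = card R2"
    unfolding R1_def C1_def R2_def C2_def
    using card_ev_cols[OF finE2] card_ev_rows[OF finM2] cE cE2 cM2 edges(1) by auto
  have split: "M \<times> {0, 1} = R1 \<union> R2" "Inl ` {0, 1} \<union> Inr ` E = C1 \<union> C2"
    using L unfolding R1_def R2_def C1_def C2_def M2_def by (auto simp: edges(4))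
  have "ev_det E dir V0 M = abs_det_on R1 C1 (ev_entry E dir V0) * abs_det_on R2 C2 (ev_entry E dir V0)"
    unfolding ev_det_def split
  proof (rule abs_det_on_block)
    show "card C1 = card R1" "card C2 = card R2" by (rule card1, rule card2)
    show "ev_entry E dir V0 r cl = 0" if r: "r \<in> R1" and cl: "cl \<in> C2" for r cl
    proof -
      obtain x c where x: "r = (x, c)" "x \<in> M2" using r unfolding R1_def by auto
      obtain e where e: "cl = Inr e" "e \<notin> E2" using cl edges(2,3) unfolding C2_def by auto
      have "x \<in> Vs2" "V0 \<in> Vs2" using x(2) MV u V0 root unfolding M2_def Vs2_def by auto
      then have "ev_entry E2 dir V0 (x, c) (Inr e) = 0" by (intro ev_entry_not_edge[OF t2 _ _ e(2)])
      then show ?thesis by (simp only: x(1) e(1) row_keep[OF x(2)])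
    qed
  qed (use fin edges in \<open>auto simp: R1_def R2_def C1_def C2_def M2_def\<close>)
  also have "abs_det_on R1 C1 (ev_entry E dir V0) = ev_det E2 dir V0 M2"
    unfolding ev_det_def R1_def C1_def
    by (rule abs_det_on_cong) (use row_keep card1 finE2 finM2 in \<open>auto simp: R1_def C1_def\<close>)
  also have "abs_det_on R2 C2 (ev_entry E dir V0) = of_int \<bar>det2 (dir Q u) (dir u L)\<bar>"
  proof -
    have V02: "V0 \<in> Vs2" using V0 root unfolding Vs2_def by auto
    have "ev_entry E2 dir V0 (Q, c) (Inr e) = 0" if "e \<notin> E2" for c e
      by (rule ev_entry_not_edge[OF t2 V02 QV that])
    then have "ev_entry E dir V0 (L, c) (Inr {u, Q}) = of_int (comp2 c (dir Q u))"
      "ev_entry E dir V0 (L, c) (Inr {L, u}) = of_int (comp2 c (dir u L))" for c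
      using row_L[of c "Inr {u, Q}"] row_L[of c "Inr {L, u}"] edges(1-3)
      by (simp_all del: ev_entry_Inr add: insert_commute)
    then show ?thesis
      unfolding R2_def C2_def using edges(1)
      by (subst abs_det_on_2x2) (auto simp del: ev_entry_Inr simp: det2_def algebra_simps)
  qed
  also have "\<bar>det2 (dir Q u) (dir u L)\<bar> = nbr_mult E dir u"
    using nbr_mult_eq[OF g u, of Q L] nu sft_antisym[OF g uQ] det2_neg1 det2_swap by auto
  finally show ?thesis unfolding E2_def E1_def M2_def by (simp add: mult.commute)
qed

text \<open>The product of the multiplicities changes accordingly: u disappears, and Q, which loses
  the edge to u, keeps its multiplicity because it stays balanced.\<close>
lemma nbr_mult_prod_end_leaf:
  assumes g: "string_free_tree Vs E dir M" and c: "end_leaf Vs E M V0 u L Q"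
  shows "(\<Prod>w\<in>Vs - M. real_of_int (nbr_mult E dir w)) = of_int (nbr_mult E dir u) *
    (\<Prod>w\<in>Vs - {L} - {u} - (M - {L}). real_of_int (nbr_mult (E - {{L, u}} - {{u, Q}}) dir w))"
proof -
  let ?E = "E - {{L, u}} - {{u, Q}}"
  have u: "u \<in> Vs - M" and nu: "nbrs E u = {L, Q}" "L \<noteq> Q" and L: "L \<in> M"
    using c by (auto simp: end_leaf_def)
  have g2: "string_free_tree (Vs - {L} - {u}) ?E dir (M - {L})" by (rule reduce_end_leaf(3)[OF g c])
  have same: "nbr_mult ?E dir w = nbr_mult E dir w" if w: "w \<in> Vs - {L} - {u} - (M - {L})" for w
  proof (cases "w = Q")
    case False
    then show ?thesis using w by (intro nbr_mult_cong) (auto simp: nbrs_def doubleton_eq_iff)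
  next
    case True
    have "Q \<noteq> u" "Q \<notin> M" using w True by auto
    have nbQ: "nbrs ?E Q = nbrs E Q - {u}"
      using \<open>Q \<noteq> u\<close> nu by (auto simp: nbrs_def doubleton_eq_iff)
    have "u \<in> nbrs E Q" using nu by (auto simp: nbrs_def insert_commute)
    then have "card (nbrs ?E Q) = 2"
      using end_leaf_other_trivalent[OF g c \<open>Q \<notin> M\<close>] nbQ
        nbrs_finite[OF tree_wf[OF sft_tree[OF g]] sft_finite(1)[OF g], of Q] by simp
    then obtain w1 w2 where ww: "nbrs ?E Q = {w1, w2}" "w1 \<noteq> w2" by (meson card_2_iff)
    then have "w1 \<in> nbrs E Q" "w2 \<in> nbrs E Q" using nbQ by auto
    moreover have "Q \<in> Vs - M" using w True by auto
    ultimately show ?thesis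
      using True nbr_mult_eq[OF g2 w, of w1 w2] nbr_mult_eq[OF g, of Q w1 w2] ww by auto
  qed
  have "Vs - M = insert u (Vs - {L} - {u} - (M - {L}))" "u \<notin> Vs - {L} - {u} - (M - {L})"
    using u L by auto
  then show ?thesis using sft_finite(1)[OF g] same by (simp add: prod.insert)
qed

lemma abs_det_on_subtract_vertex_rows:
  fixes A :: "'a \<times> nat \<Rightarrow> 'c \<Rightarrow> real"
  assumes fin: "finite M" "finite C" "card C = card (M \<times> {0, 1::nat})"
    and ab: "a \<in> M" "b \<in> M" "a \<noteq> b"
  shows "abs_det_on (M \<times> {0, 1}) C (\<lambda>r cl. if fst r = b then A r cl - A (a, snd r) cl else A r cl)
    = abs_det_on (M \<times> {0, 1}) C A"
proof -
  let ?R = "M \<times> {0, 1::nat}"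
  let ?A1 = "\<lambda>r cl. if r = (b, 0) then A (b, 0) cl - A (a, 0) cl else A r cl"
  have finR: "finite ?R" using fin by simp
  have "abs_det_on ?R C (\<lambda>r cl. if fst r = b then A r cl - A (a, snd r) cl else A r cl)
      = abs_det_on ?R C (\<lambda>r cl. if r = (b, 1) then ?A1 (b, 1) cl - ?A1 (a, 1) cl else ?A1 r cl)"
    by (rule abs_det_on_cong[OF finR fin(2,3)]) (use ab in auto)
  also have "\<dots> = abs_det_on ?R C ?A1"
    by (rule abs_det_on_subtract_row[OF finR fin(2,3)]) (use ab in auto)
  also have "\<dots> = abs_det_on ?R C A"
    by (rule abs_det_on_subtract_row[OF finR fin(2,3)]) (use ab in auto)
  finally show ?thesis .
qed

lemma cherry_rows:
  assumes g: "string_free_tree Vs E dir M" and V0: "V0 \<in> Vs" and conf: "cherry Vs E M V0 u L1 L2"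
  shows "x \<in> Vs - {L1} - {L2} \<Longrightarrow>
      ev_entry E dir V0 (x, j) cl = ev_entry (E - {{L1, u}} - {{L2, u}}) dir V0 (x, j) cl"
    and "ev_entry E dir V0 (L1, j) cl = ev_entry (E - {{L1, u}} - {{L2, u}}) dir V0 (u, j) cl
      + (if cl = Inr {u, L1} then of_int (comp2 j (dir u L1)) else 0)"
    and "ev_entry E dir V0 (L2, j) cl = ev_entry (E - {{L1, u}} - {{L2, u}}) dir V0 (u, j) cl
      + (if cl = Inr {u, L2} then of_int (comp2 j (dir u L2)) else 0)"
proof -
  define E1 where "E1 = E - {{L1, u}}"
  have u: "u \<in> Vs" "u \<noteq> L1" "u \<noteq> L2" and L: "L1 \<in> Vs" "L2 \<in> Vs" "L1 \<noteq> L2"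
    and n: "nbrs E L1 = {u}" "nbrs E L2 = {u}" and root: "L1 \<noteq> V0" "L2 \<noteq> V0"
    using conf sft_marked[OF g] by (auto simp: cherry_def)
  have t: "is_tree Vs E" by (rule sft_tree[OF g])
  have t1: "is_tree (Vs - {L1}) E1" and n2: "nbrs E1 L2 = {u}"
    unfolding E1_def using reduce_cherry(1,2)[OF g conf] by auto
  have keep1: "ev_entry E1 dir V0 (x, j) cl = ev_entry E dir V0 (x, j) cl" if "x \<in> Vs - {L1}" for x
    unfolding E1_def by (rule ev_entry_remove_leaf[OF t L(1) n(1)]) (use that V0 root in auto)
  have keep2: "ev_entry (E1 - {{L2, u}}) dir V0 (x, j) cl = ev_entry E1 dir V0 (x, j) cl"
    if "x \<in> Vs - {L1} - {L2}" for x
    by (rule ev_entry_remove_leaf[OF t1 _ n2]) (use that V0 root L in auto)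
  show "ev_entry E dir V0 (x, j) cl = ev_entry (E - {{L1, u}} - {{L2, u}}) dir V0 (x, j) cl"
    if "x \<in> Vs - {L1} - {L2}" using keep1[of x] keep2[OF that] that unfolding E1_def by simp
  show "ev_entry E dir V0 (L1, j) cl = ev_entry (E - {{L1, u}} - {{L2, u}}) dir V0 (u, j) cl
      + (if cl = Inr {u, L1} then of_int (comp2 j (dir u L1)) else 0)"
    using ev_entry_leaf[OF t L(1) n(1), where rv = V0 and c = j and cl = cl] keep2[of u] u V0 root
    unfolding E1_def by simp
  show "ev_entry E dir V0 (L2, j) cl = ev_entry (E - {{L1, u}} - {{L2, u}}) dir V0 (u, j) cl
      + (if cl = Inr {u, L2} then of_int (comp2 j (dir u L2)) else 0)"
    using keep1[of L2] ev_entry_leaf[OF t1 _ n2, where rv = V0 and c = j and cl = cl] L V0 root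
    unfolding E1_def by simp
qed

text \<open>Subtracting the rows of L1 from those of L2 leaves in the rows of L2
  only the two edges uL1 and uL2; the resulting 2x2 minor is the multiplicity of u, and the
  remaining rows, with L1 renamed to u, form the matrix of the smaller tree with u marked.\<close>
lemma ev_det_cherry:
  assumes g: "string_free_tree Vs E dir M" and V0: "V0 \<in> Vs" and c: "cherry Vs E M V0 u L1 L2"
    and cE: "card E + 2 = 2 * card M"
  shows "ev_det E dir V0 M = of_int (nbr_mult E dir u) *
    ev_det (E - {{L1, u}} - {{L2, u}}) dir V0 (insert u (M - {L1} - {L2}))"
proof -
  define E1 E2 where "E1 = E - {{L1, u}}" and "E2 = E1 - {{L2, u}}"
  define Vs2 M2 where "Vs2 = Vs - {L1} - {L2}" and "M2 = insert u (M - {L1} - {L2})"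
  have u: "u \<in> Vs - M" and L: "L1 \<noteq> L2" "L1 \<in> M" "L2 \<in> M"
    and n: "nbrs E L1 = {u}" "nbrs E L2 = {u}" and root: "L1 \<noteq> V0" "L2 \<noteq> V0"
    using c by (auto simp: cherry_def)
  have uL: "u \<noteq> L1" "u \<noteq> L2" using u L by auto
  have MV: "M \<subseteq> Vs" and fin: "finite M" "finite E" using sft_marked[OF g] sft_finite[OF g] by auto
  have e: "{L1, u} \<in> E" "{L2, u} \<in> E" using n by (auto simp: nbrs_def insert_commute)
  have edges: "{L1, u} \<noteq> {L2, u}" "{L1, u} \<notin> E2" "{L2, u} \<notin> E2" "E = E2 \<union> {{L1, u}, {L2, u}}"
    using L uL e unfolding E2_def E1_def by (auto simp: doubleton_eq_iff)
  have "card {{L1, u}, {L2, u}} \<le> card E" using card_mono[OF fin(2)] e by simp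
  then have cE2: "card E2 + 2 = card E"
    using fin(2) e edges(1) unfolding E2_def E1_def by (simp add: card_Diff_singleton)
  have cM: "card (M - {L2}) + 1 = card M" "card M2 + 1 = card M"
    using card_Suc_Diff1[OF fin(1) L(3)] card_Suc_Diff1[of "M - {L1}" L2] card_Suc_Diff1[OF fin(1) L(2)]
      fin(1) L u unfolding M2_def by (auto simp: insert_Diff_if)
  have row_keep: "ev_entry E dir V0 (x, c) cl = ev_entry E2 dir V0 (x, c) cl" if "x \<in> Vs2" for x c cl
    using cherry_rows(1)[OF g V0 c] that unfolding Vs2_def E2_def E1_def by simp
  have row_L1: "ev_entry E dir V0 (L1, c) cl = ev_entry E2 dir V0 (u, c) cl
      + (if cl = Inr {u, L1} then of_int (comp2 c (dir u L1)) else 0)" for c cl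
    using cherry_rows(2)[OF g V0 c] unfolding E2_def E1_def .
  have row_L2: "ev_entry E dir V0 (L2, c) cl = ev_entry E2 dir V0 (u, c) cl
      + (if cl = Inr {u, L2} then of_int (comp2 c (dir u L2)) else 0)" for c cl
    using cherry_rows(3)[OF g V0 c] unfolding E2_def E1_def .
  define A where "A = ev_entry E dir V0"
  define B where "B = (\<lambda>r cl. if fst r = L2 then A r cl - A (L1, snd r) cl else A r cl)"
  define R C where "R = M \<times> {0, 1::nat}" and "C = Inl ` {0, 1::nat} \<union> Inr ` E"
  have cRC: "card C = card R"
    unfolding R_def C_def using card_ev_cols[OF fin(2)] card_ev_rows[OF fin(1)] cE by simp
  txt \<open>Block decomposition along the rows of L2 and the columns of uL1 and uL2.\<close>
  define R1 C1 where "R1 = {(L2, 0::nat), (L2, 1)}"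
    and "C1 = ({Inr {L1, u}, Inr {L2, u}} :: (nat + 'a set) set)"
  define R2 C2 where "R2 = (M - {L2}) \<times> {0, 1::nat}" and "C2 = Inl ` {0, 1::nat} \<union> Inr ` E2"
  have finE2: "finite E2" using fin unfolding E2_def E1_def by auto
  have card1: "card C1 = card R1" unfolding R1_def C1_def using edges(1) by simp
  have card2: "card C2 = card R2"
    unfolding R2_def C2_def using card_ev_cols[OF finE2] card_ev_rows[of "M - {L2}"] fin cE cE2 cM
    by simp
  have B_L2: "B (L2, c) cl = (if cl = Inr {u, L2} then of_int (comp2 c (dir u L2)) else 0)
      - (if cl = Inr {u, L1} then of_int (comp2 c (dir u L1)) else 0)" for c cl
    unfolding B_def A_def using row_L1[of c cl] row_L2[of c cl] by simp
  have "ev_det E dir V0 M = abs_det_on R C B"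
    unfolding ev_det_def B_def A_def R_def C_def
    by (rule abs_det_on_subtract_vertex_rows[symmetric]) (use fin cRC L in \<open>auto simp: R_def C_def\<close>)
  also have "abs_det_on R C B = abs_det_on R1 C1 B * abs_det_on R2 C2 B"
  proof -
    have "R = R1 \<union> R2" "C = C1 \<union> C2"
      using L unfolding R_def R1_def R2_def C_def C1_def C2_def by (auto simp: edges(4))
    moreover have "abs_det_on (R1 \<union> R2) (C1 \<union> C2) B = abs_det_on R1 C1 B * abs_det_on R2 C2 B"
    proof (rule abs_det_on_block[OF _ _ _ _ _ _ card1 card2])
      show "B r cl = 0" if "r \<in> R1" "cl \<in> C2" for r cl
        using that edges(2,3) B_L2 unfolding R1_def C2_def by (auto simp: insert_commute)
    qed (use fin finE2 edges in \<open>auto simp: R1_def R2_def C1_def C2_def\<close>)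
    ultimately show ?thesis by simp
  qed
  also have "abs_det_on R1 C1 B = of_int (nbr_mult E dir u)"
  proof -
    have "nbr_mult E dir u = \<bar>det2 (dir u L1) (dir u L2)\<bar>"
      using nbr_mult_eq[OF g u, of L1 L2] e L(1) by (simp add: nbrs_def insert_commute)
    moreover have "{u, L1} \<noteq> {L2, u}" "{u, L2} \<noteq> {L1, u}" "{u, L1} = {L1, u}" "{u, L2} = {L2, u}"
      using edges(1) by (auto simp: insert_commute)
    ultimately show ?thesis
      unfolding R1_def C1_def using edges(1)
      by (subst abs_det_on_2x2) (simp_all add: B_L2 det2_def algebra_simps)
  qed
  also have "abs_det_on R2 C2 B = ev_det E2 dir V0 M2"
  proof -
    define h where "h = (\<lambda>(x, c::nat). (if x = L1 then u else x, c))"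
    have "h ` R2 = M2 \<times> {0, 1}"
      using L uL u unfolding h_def R2_def M2_def by (auto simp: image_iff split: if_splits)
    moreover have "abs_det_on (h ` R2) C2 (ev_entry E2 dir V0) = abs_det_on R2 C2 B"
    proof (rule abs_det_on_rename_rows)
      show "finite R2" "finite C2" "card C2 = card R2"
        using fin finE2 card2 unfolding R2_def C2_def by auto
      show "inj_on h R2" using u L unfolding h_def R2_def inj_on_def by auto
      show "ev_entry E2 dir V0 (h r) cl = B r cl" if r: "r \<in> R2" and cl: "cl \<in> C2" for r cl
      proof -
        obtain x c where x: "r = (x, c)" "x \<in> M - {L2}" using r unfolding R2_def by auto
        have "cl \<noteq> Inr {u, L1}" using cl edges(2) unfolding C2_def by (auto simp: insert_commute)
        moreover have "x \<noteq> L1 \<Longrightarrow> x \<in> Vs2" using x MV unfolding Vs2_def by auto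
        ultimately show ?thesis
          using x row_L1[of c cl] row_keep[of x c cl] unfolding h_def B_def A_def
          by (auto simp del: ev_entry_Inr ev_entry_Inl)
      qed
    qed
    ultimately show ?thesis unfolding ev_det_def C2_def by simp
  qed
  finally show ?thesis unfolding E2_def E1_def M2_def .
qed

lemma nbr_mult_prod_cherry:
  assumes g: "string_free_tree Vs E dir M" and c: "cherry Vs E M V0 u L1 L2"
  shows "(\<Prod>w\<in>Vs - M. real_of_int (nbr_mult E dir w)) = of_int (nbr_mult E dir u) *
    (\<Prod>w\<in>Vs - {L1} - {L2} - insert u (M - {L1} - {L2}).
      real_of_int (nbr_mult (E - {{L1, u}} - {{L2, u}}) dir w))"
proof -
  have u: "u \<in> Vs - M" and L: "L1 \<in> M" "L2 \<in> M" using c by (auto simp: cherry_def)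
  have "Vs - M = insert u (Vs - {L1} - {L2} - insert u (M - {L1} - {L2}))"
    "u \<notin> Vs - {L1} - {L2} - insert u (M - {L1} - {L2})" using u L by auto
  moreover have "(\<Prod>w\<in>Vs - {L1} - {L2} - insert u (M - {L1} - {L2}).
      real_of_int (nbr_mult (E - {{L1, u}} - {{L2, u}}) dir w)) =
    (\<Prod>w\<in>Vs - {L1} - {L2} - insert u (M - {L1} - {L2}). real_of_int (nbr_mult E dir w))"
    by (intro prod.cong refl arg_cong[where f = real_of_int] nbr_mult_cong)
      (auto simp: nbrs_def doubleton_eq_iff)
  ultimately show ?thesis using sft_finite(1)[OF g] by (simp add: prod.insert)
qed

subsection \<open>The determinant formula\<close>

theorem ev_det_string_free_tree:
  assumes g: "string_free_tree Vs E dir M" and V0: "V0 \<in> Vs" and cE: "card E + 2 = 2 * card M"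
  shows "ev_det E dir V0 M = (\<Prod>w\<in>Vs - M. real_of_int (nbr_mult E dir w))"
  using g V0 cE
proof (induction rule: string_free_tree_induct)
  case single
  have "ev_det {} dir V0 {V0} = abs_det_on {(V0, 0), (V0, 1)} {Inl 0, Inl 1} (ev_entry {} dir V0)"
    by (simp add: ev_det_def insert_commute)
  also have "\<dots> = 1" by (subst abs_det_on_2x2) auto
  finally show ?case by simp
next
  case (leaf_pair Vs E M L Q)
  txt \<open>Impossible: the smaller tree would violate the bound |V - M| + 1 <= |M|.\<close>
  have c: "L \<in> M" "nbrs E L = {Q}" using leaf_pair.hyps(3) by (auto simp: marked_leaf_pair_def)
  have fin: "finite Vs" "finite M" "finite E" using sft_finite[OF leaf_pair.hyps(1)] by auto
  have "card (Vs - {L} - (M - {L})) + 1 \<le> card (M - {L})"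
    by (rule unmarked_count_bound[OF reduce_marked_leaf_pair[OF leaf_pair.hyps(1,3)]])
  moreover have "Vs - {L} - (M - {L}) = Vs - M" using c by auto
  moreover have "card (M - {L}) + 1 = card M" using card_Suc_Diff1[OF fin(2) c(1)] by simp
  moreover have "card (Vs - M) + card M = card Vs"
    using card_Diff_subset[OF fin(2) sft_marked[OF leaf_pair.hyps(1)]]
      card_mono[OF fin(1) sft_marked[OF leaf_pair.hyps(1)]] by simp
  moreover have "card E + 1 = card Vs" using sft_tree[OF leaf_pair.hyps(1)] by (simp add: is_tree_def)
  ultimately show ?case using leaf_pair.prems by simp
next
  case (end_leaf Vs E M u L Q)
  have c: "L \<in> M" "{L, u} \<in> E" "{u, Q} \<in> E" "{u, Q} \<noteq> {L, u}"
    using end_leaf.hyps(3) by (auto simp: end_leaf_def nbrs_def doubleton_eq_iff)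
  have fin: "finite M" "finite E" using sft_finite[OF end_leaf.hyps(1)] by auto
  have "card {{u, Q}, {L, u}} \<le> card E" using card_mono[OF fin(2), of "{{u, Q}, {L, u}}"] c by simp
  then have "card (E - {{L, u}} - {{u, Q}}) + 2 = 2 * card (M - {L})"
    using end_leaf.prems c fin card_Suc_Diff1[OF fin(1) c(1)] by (simp add: card_Diff_singleton)
  then show ?case
    using ev_det_end_leaf[OF end_leaf.hyps(1,2,3) end_leaf.prems] end_leaf.IH
      nbr_mult_prod_end_leaf[OF end_leaf.hyps(1,3)] by simp
next
  case (cherry Vs E M u L1 L2)
  have c: "L1 \<in> M" "L2 \<in> M" "L1 \<noteq> L2" "u \<notin> M" "{L1, u} \<in> E" "{L2, u} \<in> E"
    "{L1, u} \<noteq> {L2, u}"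
    using cherry.hyps(3) by (auto simp: cherry_def nbrs_def doubleton_eq_iff)
  have fin: "finite M" "finite E" using sft_finite[OF cherry.hyps(1)] by auto
  have "card {{L1, u}, {L2, u}} \<le> card E"
    using card_mono[OF fin(2), of "{{L1, u}, {L2, u}}"] c by simp
  moreover have "card (insert u (M - {L1} - {L2})) + 1 = card M"
    using card_Suc_Diff1[OF fin(1) c(1)] card_Suc_Diff1[of "M - {L1}" L2] fin c by simp
  ultimately have "card (E - {{L1, u}} - {{L2, u}}) + 2 = 2 * card (insert u (M - {L1} - {L2}))"
    using cherry.prems c fin by (simp add: card_Diff_singleton)
  then show ?case
    using ev_det_cherry[OF cherry.hyps(1,2,3) cherry.prems] cherry.IH
      nbr_mult_prod_cherry[OF cherry.hyps(1,3)] by simp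
qed

section \<open>From curves to string-free marked trees\<close>

lemma fiber_sum:
  assumes "finite T" "\<And>i. i < N \<Longrightarrow> g i \<in> T"
  shows "(\<Sum>v\<in>T. card {i. i < N \<and> g i = v}) = N"
proof -
  have "(\<Sum>v\<in>T. \<Sum>i\<in>{x. x \<in> {..<N} \<and> g x = v}. (1::nat)) = (\<Sum>i\<in>{..<N}. 1)"
    by (rule sum.group) (use assms in auto)
  then show ?thesis by simp
qed

text \<open>Counting flags, the valences add up to 2|E| + 3d + n.  By the valence hypotheses and
  the dimension condition they also add up to (3d - 1 - n) + 3|V|; with |V| = |E| + 1 this gives
  |E| = 2n - 2, i.e. the matrix of ev is square.\<close>
lemma curve_edge_count:
  assumes d1: "d \<ge> 1"
    and dim: "3 * d - 1 = n + (\<Sum>k<n. r k)"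
    and lab: "is_lab_curve d n Vs E dir endv enddir mk len"
    and inj: "inj_on mk {..<n}"
    and val_marked: "\<forall>k<n. valence d n E endv mk (mk k) = r k + 3"
    and val_unmarked: "\<forall>v\<in>Vs. v \<notin> mk ` {..<n} \<longrightarrow> valence d n E endv mk v = 3"
  shows "card E + 2 = 2 * n"
proof -
  have t: "is_tree Vs E" using lab by (simp add: is_lab_curve_def)
  have fin: "finite Vs" and cVE: "card E + 1 = card Vs" using t by (simp_all add: is_tree_def)
  have eV: "\<And>i. i < 3 * d \<Longrightarrow> endv i \<in> Vs" and mV: "\<And>k. k < n \<Longrightarrow> mk k \<in> Vs"
    using lab by (simp_all add: is_lab_curve_def)
  define M where "M = mk ` {..<n}"
  have MV: "M \<subseteq> Vs" using mV unfolding M_def by auto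
  have cM: "card M = n" unfolding M_def using card_image[OF inj] by simp
  have "(\<Sum>v\<in>Vs. valence d n E endv mk v) = 2 * card E + 3 * d + n"
    unfolding valence_def sum.distrib handshake[OF fin tree_wf[OF t]]
    using fiber_sum[OF fin eV] fiber_sum[OF fin mV] by simp
  moreover have "(\<Sum>v\<in>Vs. valence d n E endv mk v) =
      (\<Sum>v\<in>M. valence d n E endv mk v) + (\<Sum>v\<in>Vs - M. valence d n E endv mk v)"
    using fin MV by (metis sum.subset_diff add.commute)
  moreover have "(\<Sum>v\<in>M. valence d n E endv mk v) = (\<Sum>k<n. r k) + 3 * n"
    unfolding M_def using sum.reindex[OF inj, of "valence d n E endv mk"] val_marked
    by (simp add: sum.distrib)
  moreover have "(\<Sum>v\<in>Vs - M. valence d n E endv mk v) = 3 * card (Vs - M)"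
    using val_unmarked unfolding M_def by simp
  moreover have "card (Vs - M) + n = card Vs"
    using card_Diff_subset[OF finite_subset[OF MV fin] MV] card_mono[OF fin MV] cM by simp
  ultimately show ?thesis using dim d1 cVE by linarith
qed

lemma ends_at_unmarked_le1:
  assumes ns: "\<not> has_string d n E endv mk" and v: "v \<notin> mk ` {..<n}"
  shows "card {i. i < 3 * d \<and> endv i = v} \<le> 1"
proof (rule ccontr)
  assume "\<not> ?thesis"
  then obtain i j where "i < 3 * d" "j < 3 * d" "endv i = v" "endv j = v" "i \<noteq> j"
    using card_le_Suc0_iff_eq[of "{i. i < 3 * d \<and> endv i = v}"] by auto
  then have "has_string d n E endv mk"
    unfolding has_string_def using v by (intro exI[of _ i] exI[of _ j] exI[of _ "[v]"]) simp
  then show False using ns by simp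
qed

text \<open>Forgetting the ends of a string-free curve whose unmarked vertices are trivalent leaves a
  string-free marked tree: a bivalent unmarked vertex carries exactly one end, so a path of
  unmarked vertices between two of them would be a string.\<close>
lemma curve_string_free_tree:
  assumes lab: "is_lab_curve d n Vs E dir endv enddir mk len"
    and val_unmarked: "\<forall>v\<in>Vs. v \<notin> mk ` {..<n} \<longrightarrow> valence d n E endv mk v = 3"
    and ns: "\<not> has_string d n E endv mk"
  shows "string_free_tree Vs E dir (mk ` {..<n})"
  unfolding string_free_tree_def
proof (intro conjI allI impI ballI)
  show t: "is_tree Vs E" using lab by (simp add: is_lab_curve_def)
  show "mk ` {..<n} \<subseteq> Vs" using lab by (auto simp: is_lab_curve_def)
  show "dir w u = - dir u w" if "{u, w} \<in> E" for u w using lab that by (simp add: is_lab_curve_def)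
  fix u assume u: "u \<in> Vs - mk ` {..<n}"
  have nomk: "{k. k < n \<and> mk k = u} = {}" using u by auto
  have "valence d n E endv mk u = 3" using val_unmarked u by auto
  then have val: "card (nbrs E u) + card {i. i < 3 * d \<and> endv i = u} = 3"
    unfolding valence_def nomk by simp
  have le1: "card {i. i < 3 * d \<and> endv i = u} \<le> 1" using ends_at_unmarked_le1[OF ns] u by auto
  show "card (nbrs E u) = 2 \<or> card (nbrs E u) = 3" using val le1 by linarith
  assume c3: "card (nbrs E u) = 3"
  then have "card {i. i < 3 * d \<and> endv i = u} = 0" using val by simp
  then have e0: "{i. i < 3 * d \<and> endv i = u} = {}" by simp
  have "(\<Sum>w\<in>nbrs E u. dir u w) + (\<Sum>i\<in>{i. i < 3 * d \<and> endv i = u}. enddir i) = 0"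
    using lab u by (simp add: is_lab_curve_def)
  then show "(\<Sum>w\<in>nbrs E u. dir u w) = 0" using e0 by simp
next
  fix a b ps
  assume h: "a \<in> Vs - mk ` {..<n} \<and> b \<in> Vs - mk ` {..<n} \<and> a \<noteq> b \<and> card (nbrs E a) = 2 \<and>
    card (nbrs E b) = 2 \<and> is_path E ps a b"
  have one: "\<exists>i. i < 3 * d \<and> endv i = x" if x: "x \<in> Vs - mk ` {..<n}" "card (nbrs E x) = 2" for x
  proof -
    have nomk: "{k. k < n \<and> mk k = x} = {}" using x by auto
    have "valence d n E endv mk x = 3" using val_unmarked x by auto
    then have "card (nbrs E x) + card {i. i < 3 * d \<and> endv i = x} = 3"
      unfolding valence_def nomk by simp
    then have "card {i. i < 3 * d \<and> endv i = x} = 1" using x by simp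
    then show ?thesis by (metis (mono_tags, lifting) One_nat_def card_1_singleton_iff mem_Collect_eq singletonI)
  qed
  obtain i where i: "i < 3 * d" "endv i = a" using one h by blast
  obtain j where j: "j < 3 * d" "endv j = b" using one h by blast
  show "\<not> set ps \<subseteq> Vs - mk ` {..<n}"
  proof
    assume S: "set ps \<subseteq> Vs - mk ` {..<n}"
    have "i \<noteq> j" using i j h by auto
    moreover have "is_path E ps (endv i) (endv j)" using i j h by simp
    moreover have "\<forall>x\<in>set ps. x \<notin> mk ` {..<n}" using S by auto
    ultimately have "has_string d n E endv mk" unfolding has_string_def using i j by blast
    then show False using ns by simp
  qed
qed

lemma vertex_mult_eq_nbr_mult:
  assumes lab: "is_lab_curve d n Vs E dir endv enddir mk len"
    and val_unmarked: "\<forall>v\<in>Vs. v \<notin> mk ` {..<n} \<longrightarrow> valence d n E endv mk v = 3"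
    and ns: "\<not> has_string d n E endv mk"
    and v: "v \<in> Vs - mk ` {..<n}"
  shows "vertex_mult d E dir endv enddir v = nbr_mult E dir v"
proof -
  have g: "string_free_tree Vs E dir (mk ` {..<n})" by (rule curve_string_free_tree[OF lab val_unmarked ns])
  have finN: "finite (nbrs E v)" by (rule nbrs_finite[OF tree_wf[OF sft_tree[OF g]] sft_finite(1)[OF g]])
  define EN where "EN = {i. i < 3 * d \<and> endv i = v}"
  let ?S = "adj_edges d E endv v"
  have S: "?S = Inl ` nbrs E v \<union> Inr ` EN" unfolding adj_edges_def EN_def ..
  have finS: "finite ?S" unfolding S EN_def using finN by simp
  have nomk: "{k. k < n \<and> mk k = v} = {}" using v by auto
  have "valence d n E endv mk v = 3" using val_unmarked v by auto
  then have val: "card (nbrs E v) + card EN = 3" unfolding valence_def EN_def nomk by simp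
  have cS: "card ?S = 3"
    unfolding S using finN val by (subst card_Un_disjoint) (auto simp: EN_def card_image)
  have bal: "(\<Sum>x\<in>?S. out_dir dir enddir v x) = 0"
  proof -
    have "(\<Sum>x\<in>?S. out_dir dir enddir v x) = (\<Sum>w\<in>nbrs E v. dir v w) + (\<Sum>i\<in>EN. enddir i)"
      unfolding S using finN by (subst sum.union_disjoint) (auto simp: EN_def sum.reindex out_dir_def)
    also have "\<dots> = 0" using lab v unfolding EN_def by (simp add: is_lab_curve_def)
    finally show ?thesis .
  qed
  have "\<not> card (nbrs E v) \<le> Suc 0" using sft_degree[OF g v] by auto
  then obtain w1 w2 where w: "w1 \<in> nbrs E v" "w2 \<in> nbrs E v" "w1 \<noteq> w2"
    using card_le_Suc0_iff_eq[OF finN] by blast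
  have ex: "\<exists>m. \<exists>a\<in>?S. \<exists>b\<in>?S. a \<noteq> b \<and> m = \<bar>det2 (out_dir dir enddir v a) (out_dir dir enddir v b)\<bar>"
    using w unfolding S by blast
  obtain a b where ab: "a \<in> ?S" "b \<in> ?S" "a \<noteq> b"
    "vertex_mult d E dir endv enddir v = \<bar>det2 (out_dir dir enddir v a) (out_dir dir enddir v b)\<bar>"
    using someI_ex[OF ex] unfolding vertex_mult_def by blast
  have wS: "Inl w1 \<in> ?S" "Inl w2 \<in> ?S" "(Inl w1 :: 'a + nat) \<noteq> Inl w2" using w unfolding S by auto
  have "\<bar>det2 (out_dir dir enddir v a) (out_dir dir enddir v b)\<bar>
      = \<bar>det2 (out_dir dir enddir v (Inl w1)) (out_dir dir enddir v (Inl w2))\<bar>"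
    by (rule abs_det2_pair_independent[OF finS _ _ wS ab(1-3)]) (use cS bal in auto)
  also have "\<dots> = nbr_mult E dir v" using nbr_mult_eq[OF g v w] by (simp add: out_dir_def)
  finally show ?thesis using ab(4) by simp
qed

lemma ev_matrix_abs_det:
  assumes t: "is_tree Vs E" and inj: "inj_on mk {..<n}"
    and cE: "card E + 2 = 2 * n" and eo: "bij_betw eo {..<card E} E"
  shows "\<bar>det (ev_matrix n E dir mk V0 eo)\<bar> = ev_det E dir V0 (mk ` {..<n})"
proof -
  define f where "f = (\<lambda>i. (mk (i div 2), i mod 2))"
  define g where "g = (\<lambda>j. if j < 2 then Inl j else Inr (eo (j - 2)) :: nat + 'a set)"
  have f: "bij_betw f {..<2 * n} (mk ` {..<n} \<times> {0, 1})"
    unfolding bij_betw_def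
  proof
    show "inj_on f {..<2 * n}"
    proof (rule inj_onI)
      fix i j assume "i \<in> {..<2 * n}" "j \<in> {..<2 * n}" "f i = f j"
      then have "i div 2 = j div 2" "i mod 2 = j mod 2"
        using inj unfolding f_def inj_on_def by auto
      then show "i = j" by (metis div_mod_decomp)
    qed
    have "(mk k, c) \<in> f ` {..<2 * n}" if "k < n" "c < 2" for k c
      using that unfolding f_def by (intro image_eqI[of _ _ "2 * k + c"]) auto
    then show "f ` {..<2 * n} = mk ` {..<n} \<times> {0, 1}"
      unfolding f_def by (auto simp: less_mult_imp_div_less)
  qed
  have "bij_betw Inl {..<2::nat} (Inl ` {0, 1} :: (nat + 'a set) set)"
    by (auto simp: bij_betw_def lessThan_Suc)
  moreover have "bij_betw (Inr \<circ> eo) {..<card E} (Inr ` E :: (nat + 'a set) set)"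
    by (rule bij_betw_trans[OF eo inj_on_imp_bij_betw]) (simp add: inj_on_def)
  ultimately have "bij_betw (\<lambda>i. if i < 2 then Inl i else (Inr \<circ> eo) (i - 2)) {..<2 + card E}
      (Inl ` {0, 1} \<union> Inr ` E)"
    by (rule bij_concat) auto
  moreover have "(\<lambda>i. if i < 2 then Inl i else (Inr \<circ> eo) (i - 2)) = g" unfolding g_def by auto
  moreover have "2 + card E = 2 * n" using cE by simp
  ultimately have g: "bij_betw g {..<2 * n} (Inl ` {0, 1} \<union> Inr ` E)" by simp
  have "index_mat (2 * n) f g (ev_entry E dir V0) = ev_matrix n E dir mk V0 eo"
    unfolding index_mat_def ev_matrix_def
    by (rule eq_matI) (auto simp: f_def g_def ev_entry_def path_coord_def Let_def)
  then show ?thesis using abs_det_on_eq[OF f g, of "ev_entry E dir V0"] by (simp add: ev_det_def)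
qed

theorem mainTheorem1:
  fixes d n :: nat and r :: "nat \<Rightarrow> nat"
    and Vs :: "'v set" and E :: "'v set set" and dir :: "'v \<Rightarrow> 'v \<Rightarrow> int \<times> int"
    and endv :: "nat \<Rightarrow> 'v" and enddir :: "nat \<Rightarrow> int \<times> int" and mk :: "nat \<Rightarrow> 'v"
    and len :: "'v set \<Rightarrow> real"
  assumes "d \<ge> 1" and "n \<ge> 1"
    and "3 * d - 1 = n + (\<Sum>k<n. r k)"
    and "is_lab_curve d n Vs E dir endv enddir mk len"
    and "inj_on mk {..<n}"
    and "\<forall>k<n. valence d n E endv mk (mk k) = r k + 3"
    and "\<forall>v\<in>Vs. v \<notin> mk ` {..<n} \<longrightarrow> valence d n E endv mk v = 3"
    and "\<not> has_string d n E endv mk"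
  shows "card E = 2 * n - 2 \<and>
    (\<forall>V0\<in>Vs. \<forall>eo. bij_betw eo {..<card E} E \<longrightarrow>
       \<bar>det (ev_matrix n E dir mk V0 eo)\<bar> =
         (\<Prod>v\<in>Vs - mk ` {..<n}. of_int (vertex_mult d E dir endv enddir v)) \<and>
       nu_C d Vs endv enddir * \<bar>det (ev_matrix n E dir mk V0 eo)\<bar> =
         mult_C d n Vs E dir endv enddir mk)"
proof -
  note lab = assms(4) and val_unmarked = assms(7) and no_string = assms(8)
  have card_E: "card E + 2 = 2 * n" by (rule curve_edge_count[OF assms(1,3-7)])
  have g: "string_free_tree Vs E dir (mk ` {..<n})"
    by (rule curve_string_free_tree[OF lab val_unmarked no_string])
  have det: "\<bar>det (ev_matrix n E dir mk V0 eo)\<bar> =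
      (\<Prod>v\<in>Vs - mk ` {..<n}. of_int (vertex_mult d E dir endv enddir v))"
    if "V0 \<in> Vs" and "bij_betw eo {..<card E} E" for V0 eo
  proof -
    have "\<bar>det (ev_matrix n E dir mk V0 eo)\<bar> = ev_det E dir V0 (mk ` {..<n})"
      by (rule ev_matrix_abs_det[OF sft_tree[OF g] assms(5) card_E that(2)])
    also have "\<dots> = (\<Prod>v\<in>Vs - mk ` {..<n}. real_of_int (nbr_mult E dir v))"
      using ev_det_string_free_tree[OF g that(1)] card_E card_image[OF assms(5)] by simp
    also have "\<dots> = (\<Prod>v\<in>Vs - mk ` {..<n}. of_int (vertex_mult d E dir endv enddir v))"
      using vertex_mult_eq_nbr_mult[OF lab val_unmarked no_string] by simp
    finally show ?thesis .
  qed
  txt \<open>All unmarked vertices are trivalent, so mult(C) is nu_C times the same product.\<close>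
  have "{v \<in> Vs. valence d n E endv mk v = 3 \<and> v \<notin> mk ` {..<n}} = Vs - mk ` {..<n}"
    using val_unmarked by auto
  then show ?thesis using card_E det unfolding mult_C_def by auto
qed

end
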